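(* Let $\rho$ be an $N$-qubit density matrix and let $O_1,\dots,O_L$ be Hermitian $N$-qubit observables with operator norm $\|O_l\|_\infty=1$, each acting nontrivially on at most $K$ qubits (i.e. $O_l=O_{l,\mathsf K_l}\otimes\mathbb I_{\neg\mathsf K_l}$ with $|\mathsf K_l|\le K$). Fix $\epsilon,\delta\in(0,1)$. If $\hat\sigma_1,\dots,\hat\sigma_M$ are independent SIC POVM classical shadows of $\rho$ with $M\ge\tfrac83\,6^K\log(2L/\delta)/\epsilon^2$, then with probability at least $1-\delta$, $\big|\frac1M\sum_{m=1}^M\mathrm{tr}(O_l\hat\sigma_m)-\mathrm{tr}(O_l\rho)\big|\le\epsilon$ holds simultaneously for all $l=1,\dots,L$.
   Context: Let $|\psi_1\rangle,\dots,|\psi_4\rangle\in\mathbb C^2$ be unit vectors forming a single-qubit SIC set, i.e. $|\langle\psi_i|\psi_j\rangle|^2=1/3$ for all $i\neq j$; then $\{\tfrac12|\psi_i\rangle\langle\psi_i|\}_{i=1}^4$ is a POVM. Performing this measurement on each qubit of an $N$-qubit state $\rho$ yields an outcome string $(i_1,\dots,i_N)\in\{1,2,3,4\}^N$ with probability $\Pr[i_1\cdots i_N\mid\rho]=2^{-N}\langle\psi_{i_1}\otimes\cdots\otimes\psi_{i_N}|\,\rho\,|\psi_{i_1}\otimes\cdots\otimes\psi_{i_N}\rangle$. The SIC POVM classical shadow associated with this outcome is $\hat\sigma=\bigotimes_{n=1}^N\big(3|\psi_{i_n}\rangle\langle\psi_{i_n}|-\mathbb I\big)$. $\log$ is the natural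 logarithm. *)

theory Defs
  imports Complex_Main "Jordan_Normal_Form.Matrix"
begin

text \<open>N-qubit operators are complex (2^N x 2^N) matrices. The computational basis index
  i < 2^N encodes qubit n by bit n of i.\<close>

definition qbit :: "nat \<Rightarrow> nat \<Rightarrow> nat" where
  "qbit n i = (i div 2 ^ n) mod 2"

definition dagger :: "complex mat \<Rightarrow> complex mat" where
  "dagger A = mat (dim_col A) (dim_row A) (\<lambda>(i, j). cnj (A $$ (j, i)))"

definition ctrace :: "complex mat \<Rightarrow> complex" where
  "ctrace A = (\<Sum>i<dim_row A. A $$ (i, i))"

definition hermitian :: "complex mat \<Rightarrow> bool" where
  "hermitian A \<longleftrightarrow> dim_row A = dim_col A \<and> dagger A = A"

definition vnorm :: "complex vec \<Rightarrow> real" where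
  "vnorm v = sqrt (\<Sum>i<dim_vec v. (cmod (v $ i))\<^sup>2)"

definition opnorm :: "complex mat \<Rightarrow> real" where
  "opnorm A = Sup {vnorm (A *\<^sub>v v) | v. v \<in> carrier_vec (dim_col A) \<and> vnorm v = 1}"

text \<open>Density matrix on N qubits: Hermitian, positive semidefinite, unit trace.
  Note: v \<bullet>c w = sum_i v_i * cnj (w_i), so (A v) \<bullet>c v = <v|A|v>.\<close>
definition density_matrix :: "nat \<Rightarrow> complex mat \<Rightarrow> bool" where
  "density_matrix N \<rho> \<longleftrightarrow> \<rho> \<in> carrier_mat (2 ^ N) (2 ^ N) \<and> hermitian \<rho> \<and>
     (\<forall>v \<in> carrier_vec (2 ^ N). Im ((\<rho> *\<^sub>v v) \<bullet>c v) = 0 \<and> Re ((\<rho> *\<^sub>v v) \<bullet>c v) \<ge> 0) \<and>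
     ctrace \<rho> = 1"

definition restr_bits :: "nat set \<Rightarrow> nat \<Rightarrow> nat \<Rightarrow> bool" where
  "restr_bits S i = (\<lambda>n. n \<in> S \<and> qbit n i = 1)"

text \<open>O = O_S \<otimes> I on the complement of S: the matrix entries are those of an arbitrary
  operator O_S (indexed by bit assignments of the qubits in S) times the identity on the
  remaining qubits.\<close>
definition acts_on :: "nat \<Rightarrow> nat set \<Rightarrow> complex mat \<Rightarrow> bool" where
  "acts_on N S A \<longleftrightarrow> S \<subseteq> {0..<N} \<and>
     (\<exists>(OS :: (nat \<Rightarrow> bool) \<Rightarrow> (nat \<Rightarrow> bool) \<Rightarrow> complex).
        A = mat (2 ^ N) (2 ^ N) (\<lambda>(i, j).
              if (\<forall>n \<in> {0..<N} - S. qbit n i = qbit n j)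
              then OS (restr_bits S i) (restr_bits S j) else 0))"

definition acts_on_at_most :: "nat \<Rightarrow> nat \<Rightarrow> complex mat \<Rightarrow> bool" where
  "acts_on_at_most N K A \<longleftrightarrow> (\<exists>S. card S \<le> K \<and> acts_on N S A)"

definition tensor_ops :: "nat \<Rightarrow> (nat \<Rightarrow> complex mat) \<Rightarrow> complex mat" where
  "tensor_ops N A = mat (2 ^ N) (2 ^ N) (\<lambda>(i, j). \<Prod>n<N. A n $$ (qbit n i, qbit n j))"

definition tensor_vecs :: "nat \<Rightarrow> (nat \<Rightarrow> complex vec) \<Rightarrow> complex vec" where
  "tensor_vecs N v = vec (2 ^ N) (\<lambda>i. \<Prod>n<N. v n $ qbit n i)"

definition proj :: "complex vec \<Rightarrow> complex mat" where
  "proj \<psi> = mat 2 2 (\<lambda>(a, b). \<psi> $ a * cnj (\<psi> $ b))"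

text \<open>Single-qubit SIC set, indexed by 0..3 (the paper's 1..4).\<close>
definition sic_set :: "(nat \<Rightarrow> complex vec) \<Rightarrow> bool" where
  "sic_set \<psi> \<longleftrightarrow> (\<forall>i<4. \<psi> i \<in> carrier_vec 2 \<and> vnorm (\<psi> i) = 1) \<and>
     (\<forall>i<4. \<forall>j<4. i \<noteq> j \<longrightarrow> (cmod (\<psi> i \<bullet>c \<psi> j))\<^sup>2 = 1 / 3)"

definition outcomes :: "nat \<Rightarrow> (nat \<Rightarrow> nat) set" where
  "outcomes N = PiE {0..<N} (\<lambda>_. {0..<4})"

text \<open>Pr[s | rho] = 2^-N <psi_s|rho|psi_s> (real for a density matrix).\<close>
definition sic_prob :: "(nat \<Rightarrow> complex vec) \<Rightarrow> nat \<Rightarrow> complex mat \<Rightarrow> (nat \<Rightarrow> nat) \<Rightarrow> real" where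
  "sic_prob \<psi> N \<rho> s =
     (let v = tensor_vecs N (\<lambda>n. \<psi> (s n)) in Re ((\<rho> *\<^sub>v v) \<bullet>c v) / 2 ^ N)"

definition sic_shadow :: "(nat \<Rightarrow> complex vec) \<Rightarrow> nat \<Rightarrow> (nat \<Rightarrow> nat) \<Rightarrow> complex mat" where
  "sic_shadow \<psi> N s = tensor_ops N (\<lambda>n. 3 \<cdot>\<^sub>m proj (\<psi> (s n)) - 1\<^sub>m 2)"

definition iid_prob :: "(nat \<Rightarrow> complex vec) \<Rightarrow> nat \<Rightarrow> complex mat \<Rightarrow> nat \<Rightarrow>
     ((nat \<Rightarrow> nat \<Rightarrow> nat) \<Rightarrow> bool) \<Rightarrow> real" where
  "iid_prob \<psi> N \<rho> M E =
     (\<Sum>ss \<in> {ss \<in> PiE {0..<M} (\<lambda>_. outcomes N). E ss}. \<Prod>m<M. sic_prob \<psi> N \<rho> (ss m))"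

end

theory Submission
  imports Defs
begin

text \<open>
  A single-shot estimate \<open>tr(O \<sigma>)\<close> is unbiased because the SIC vectors form a frame and a
  2-design: \<open>\<Sum>\<^sub>t P\<^sub>t = 2I\<close> and \<open>\<Sum>\<^sub>t P\<^sub>t \<otimes> P\<^sub>t = 2/3 (I + SWAP)\<close>, so the shadow
  \<open>3P - I\<close> inverts the measurement channel on every qubit. If \<open>O\<close> acts on a set \<open>S\<close> of
  \<open>k \<le> K\<close> qubits, the estimate depends only on the outcomes in \<open>S\<close>, whose marginal probabilities are
  at most \<open>2\<^sup>-\<^sup>k\<close>. Writing \<open>3P - I = 2P - P\<^sup>\<bottom>\<close> bounds each estimate by \<open>3\<^sup>k\<close>, and an induction
  over the qubits of \<open>S\<close> bounds \<open>\<Sum>\<^sub>t |tr(O\<^sub>S \<sigma>\<^sub>t)|\<^sup>2\<close> by \<open>6\<^sup>k \<parallel>O\<^sub>S\<parallel>\<^sub>H\<^sub>S\<^sup>2 \<le> 12\<^sup>k\<close>, so the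
  variance is at most \<open>6\<^sup>K\<close>. Chernoff's bound for the mean of \<open>M\<close> i.i.d. copies with range and
  variance \<open>6\<^sup>K\<close> gives a failure probability \<open>2 exp(-3M\<epsilon>\<^sup>2 / (8 \<cdot> 6\<^sup>K))\<close> per observable, and a
  union bound over the \<open>L\<close> observables finishes the proof.
\<close>

section \<open>Bit strings\<close>

lemma sum_Times: "(\<Sum>p\<in>A \<times> B. h p) = (\<Sum>a\<in>A. \<Sum>b\<in>B. h (a,b))"
  by (simp add: sum.cartesian_product)

lemma sum_PiE_union:
  assumes "A \<inter> B = {}"
  shows "(\<Sum>f\<in>PiE (A \<union> B) C. h f) = (\<Sum>g\<in>PiE A C. \<Sum>g'\<in>PiE B C. h (override_on g' g A))"
proof -
  have "(\<Sum>f\<in>PiE (A \<union> B) C. h f) = (\<Sum>p\<in>PiE A C \<times> PiE B C. h (override_on (snd p) (fst p) A))"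
    using assms
    by (intro sum.reindex_bij_witness[of _ "\<lambda>p. override_on (snd p) (fst p) A" "\<lambda>f. (restrict f A, restrict f B)"])
      (auto simp: override_on_def PiE_def extensional_def fun_eq_iff Pi_def intro!: arg_cong[where f=h])
  then show ?thesis by (simp add: sum.cartesian_product split_beta)
qed

lemma sum_PiE_prod:
  fixes f :: "'a \<Rightarrow> 'b \<Rightarrow> 'c :: comm_semiring_1"
  assumes "finite A" "\<And>x. x \<in> A \<Longrightarrow> finite (B x)"
  shows "(\<Sum>g\<in>PiE A B. \<Prod>x\<in>A. f x (g x)) = (\<Prod>x\<in>A. \<Sum>y\<in>B x. f x y)"
  using prod_sum_PiE[of A B f] assms by simp

lemma sum_PiE_insert:
  assumes "n \<notin> W"
  shows "(\<Sum>f\<in>PiE (insert n W) B. h f) = (\<Sum>x\<in>B n. \<Sum>g\<in>PiE W B. h (g(n := x)))"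
  unfolding PiE_insert_eq sum.reindex[OF inj_combinator[OF assms]] by (simp add: sum.cartesian_product split_beta)

lemma qbit_less_2[simp]: "qbit n i < 2"
  by (simp add: qbit_def)

lemma binary_expansion: "i mod 2 ^ N = (\<Sum>n<N. qbit n i * 2 ^ n)"
proof (induction N)
  case 0 then show ?case by simp
next
  case (Suc N)
  have "i mod 2 ^ Suc N = 2 ^ N * (i div 2 ^ N mod 2) + i mod 2 ^ N"
    using mod_mult2_eq[of i "2^N" 2] by (simp add: mult.commute)
  then show ?case using Suc by (simp add: qbit_def mult.commute)
qed

lemma qbit_eq_imp_eq:
  assumes "i < 2 ^ N" "j < 2 ^ N" "\<And>n. n < N \<Longrightarrow> qbit n i = qbit n j"
  shows "i = j"
proof -
  have "i = i mod 2 ^ N" "j = j mod 2 ^ N" using assms by auto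
  then show ?thesis using assms binary_expansion[of i N] binary_expansion[of j N] by auto
qed

definition bitvec_of :: "nat \<Rightarrow> nat \<Rightarrow> nat \<Rightarrow> nat" where
  "bitvec_of N i = restrict (\<lambda>n. qbit n i) {..<N}"

abbreviation bitvecs :: "nat set \<Rightarrow> (nat \<Rightarrow> nat) set" where
  "bitvecs A \<equiv> PiE A (\<lambda>_. {..<2::nat})"

lemma bitvec_of_in: "bitvec_of N i \<in> bitvecs {..<N}"
  by (auto simp: bitvec_of_def)

lemma bitvec_of_apply[simp]: "n < N \<Longrightarrow> bitvec_of N i n = qbit n i"
  by (simp add: bitvec_of_def)

lemma bij_betw_bitvec_of: "bij_betw (bitvec_of N) {..<2 ^ N} (bitvecs {..<N})"
proof -
  have inj: "inj_on (bitvec_of N) {..<2 ^ N}"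
  proof (rule inj_onI)
    fix i j assume "i \<in> {..<2^N}" "j \<in> {..<2^N}" "bitvec_of N i = bitvec_of N j"
    then show "i = j"
    proof (intro qbit_eq_imp_eq[of i N j])
      fix n assume "n < N" "bitvec_of N i = bitvec_of N j"
      then have "bitvec_of N i n = bitvec_of N j n" by simp
      then show "qbit n i = qbit n j" using \<open>n < N\<close> by simp
    qed auto
  qed
  have sub: "bitvec_of N ` {..<2 ^ N} \<subseteq> bitvecs {..<N}" using bitvec_of_in by auto
  have "card (bitvec_of N ` {..<2 ^ N}) = 2 ^ N" using inj card_image by fastforce
  moreover have "card (bitvecs {..<N}) = 2 ^ N" by (simp add: card_PiE)
  ultimately have "bitvec_of N ` {..<2 ^ N} = bitvecs {..<N}"
    using sub by (intro card_subset_eq) (auto simp: finite_PiE)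
  then show ?thesis using inj by (simp add: bij_betw_def)
qed

lemma sum_reindex_bitvec_of:
  assumes "\<And>i. i < 2 ^ N \<Longrightarrow> F i = G (bitvec_of N i)"
  shows "(\<Sum>i<2 ^ N. F i) = (\<Sum>b\<in>bitvecs {..<N}. G b)"
proof -
  have "(\<Sum>i<2 ^ N. F i) = (\<Sum>i<2 ^ N. G (bitvec_of N i))" using assms by simp
  also have "\<dots> = (\<Sum>b\<in>bitvecs {..<N}. G b)" by (rule sum.reindex_bij_betw[OF bij_betw_bitvec_of])
  finally show ?thesis .
qed

lemma prod_qbit_delta:
  assumes "i < 2 ^ N" "j < 2 ^ N"
  shows "(\<Prod>n<N. (if qbit n i = qbit n j then 1 else 0 :: 'a :: comm_semiring_1)) = (if i = j then 1 else 0)"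
proof (cases "i = j")
  case True then show ?thesis by simp
next
  case False
  then obtain n where "n < N" "qbit n i \<noteq> qbit n j" using qbit_eq_imp_eq assms by blast
  then have "(\<Prod>n<N. (if qbit n i = qbit n j then 1 else 0 :: 'a)) = 0"
    by (intro prod_zero) (auto intro!: bexI[of _ n])
  then show ?thesis using False by simp
qed

lemma prod_2_mult: "(\<Prod>n<N. 2 * (A n * B n)) = (2::'a::comm_semiring_1)^N * ((\<Prod>n<N. A n) * (\<Prod>n<N. B n))"
  by (induction N) (auto simp: mult_ac)

lemma prod_if_2: "(\<Prod>n<N. (if P n then 2 else 0::'a::comm_semiring_1)) = 2^N * (\<Prod>n<N. if P n then 1 else 0)"
  by (induction N) (auto simp: mult_ac)

lemma sum_qbit_delta_collapse:
  fixes F :: "nat \<Rightarrow> nat \<Rightarrow> complex"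
  assumes "j < 2^N" "i < 2^N"
  shows "(\<Sum>k<2^N. \<Sum>l<2^N. F k l * (\<Prod>n<N. 2 * ((if qbit n j = qbit n k then 1 else 0) * (if qbit n l = qbit n i then 1 else 0))))
     = 2^N * F j i"
proof -
  have "(\<Sum>k<2^N. \<Sum>l<2^N. F k l * (\<Prod>n<N. 2 * ((if qbit n j = qbit n k then 1 else 0) * (if qbit n l = qbit n i then 1 else 0))))
      = (\<Sum>k<2^N. \<Sum>l<2^N. F k l * (2^N * ((if j = k then 1 else 0) * (if l = i then 1 else 0))))"
  proof (intro sum.cong refl)
    fix k l assume "k \<in> {..<2^N::nat}" "l \<in> {..<2^N::nat}"
    then have kl: "k < 2^N" "l < 2^N" by auto
    have e1: "(\<Prod>n<N. if qbit n j = qbit n k then 1 else 0) = (if j = k then 1 else (0::complex))"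
      using prod_qbit_delta[of j N k] assms kl by simp
    have e2: "(\<Prod>n<N. if qbit n l = qbit n i then 1 else 0) = (if l = i then 1 else (0::complex))"
      using prod_qbit_delta[of l N i] assms kl by simp
    show "F k l * (\<Prod>n<N. 2 * ((if qbit n j = qbit n k then 1 else 0) * (if qbit n l = qbit n i then 1 else 0))) =
       F k l * (2^N * ((if j = k then 1 else 0) * (if l = i then 1 else 0)))"
      by (simp only: prod_2_mult e1 e2)
  qed
  also have "\<dots> = (\<Sum>k<2^N. \<Sum>l<2^N. if k = j then (if l = i then 2^N * F k l else 0) else 0)"
    by (intro sum.cong refl) auto
  also have "\<dots> = (\<Sum>k<2^N. if k = j then (\<Sum>l<2^N. if l = i then 2^N * F k l else 0) else 0)"
    by (intro sum.cong refl) auto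
  also have "\<dots> = 2^N * F j i" using assms
    by (simp add: sum.delta)
  finally show ?thesis .
qed

lemma sum_lessThan_2: "(\<Sum>t<2. f t) = f 0 + f (1::nat)"
  by (simp add: numeral_eq_Suc)

lemma sum_lessThan_4: "(\<Sum>t<4. f t) = f 0 + f 1 + f 2 + f (3::nat)"
  by (simp add: numeral_eq_Suc)

section \<open>Tensor pairings\<close>

text \<open>\<open>tensor_pairing N A g = tr (A (g\<^sub>0 \<otimes> \<dots> \<otimes> g\<^sub>N\<^sub>-\<^sub>1))\<close>, the \<open>2\<times>2\<close> factors given by their
  entry functions; Born probabilities and shadow estimates are both of this form.\<close>

definition tensor_pairing :: "nat \<Rightarrow> complex mat \<Rightarrow> (nat \<Rightarrow> nat \<Rightarrow> nat \<Rightarrow> complex) \<Rightarrow> complex" where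
  "tensor_pairing N A g = (\<Sum>i<2^N. \<Sum>j<2^N. A $$ (i,j) * (\<Prod>n<N. g n (qbit n j) (qbit n i)))"

definition outer :: "complex vec \<Rightarrow> nat \<Rightarrow> nat \<Rightarrow> complex" where "outer v a b = v $ a * cnj (v $ b)"

definition shadow_op :: "complex vec \<Rightarrow> nat \<Rightarrow> nat \<Rightarrow> complex" where
  "shadow_op v a b = 3 * outer v a b - (if a = b then 1 else 0)"

lemma index_mult_mat_vec_sum: "A \<in> carrier_mat n m \<Longrightarrow> v \<in> carrier_vec m \<Longrightarrow> i < n \<Longrightarrow>
   (A *\<^sub>v v) $ i = (\<Sum>j<m. A $$ (i,j) * v $ j)"
  by (simp add: scalar_prod_def atLeast0LessThan)

lemma tensor_vecs_carrier[simp]: "tensor_vecs N u \<in> carrier_vec (2^N)"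
  by (simp add: tensor_vecs_def)

lemma dim_tensor_vecs[simp]: "dim_vec (tensor_vecs N w) = 2^N"
  by (simp add: tensor_vecs_def)

lemma tensor_vecs_index: "i < 2^N \<Longrightarrow> tensor_vecs N u $ i = (\<Prod>n<N. u n $ qbit n i)"
  by (simp add: tensor_vecs_def)

lemma quad_form_tensor_vecs:
  assumes A: "A \<in> carrier_mat (2^N) (2^N)"
  shows "(A *\<^sub>v tensor_vecs N u) \<bullet>c tensor_vecs N u = tensor_pairing N A (\<lambda>n. outer (u n))"
proof -
  let ?v = "tensor_vecs N u"
  have "(A *\<^sub>v ?v) \<bullet>c ?v = (\<Sum>i<2^N. (A *\<^sub>v ?v) $ i * cnj (?v $ i))"
    by (simp add: scalar_prod_def atLeast0LessThan tensor_vecs_def)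
  also have "\<dots> = (\<Sum>i<2^N. \<Sum>j<2^N. A $$ (i,j) * (\<Prod>n<N. outer (u n) (qbit n j) (qbit n i)))"
  proof (rule sum.cong[OF refl])
    fix i :: nat assume i: "i \<in> {..<2^N}"
    have "(A *\<^sub>v ?v) $ i * cnj (?v $ i) = (\<Sum>j<2^N. A $$ (i,j) * ?v $ j) * cnj (?v $ i)"
      using A i by (subst index_mult_mat_vec_sum[OF A tensor_vecs_carrier]) auto
    also have "\<dots> = (\<Sum>j<2^N. A $$ (i,j) * (?v $ j * cnj (?v $ i)))"
      by (simp add: sum_distrib_right mult.assoc)
    also have "\<dots> = (\<Sum>j<2^N. A $$ (i,j) * (\<Prod>n<N. outer (u n) (qbit n j) (qbit n i)))"
      using i by (intro sum.cong refl) (simp add: tensor_vecs_index cnj_prod prod.distrib[symmetric] outer_def)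
    finally show "(A *\<^sub>v ?v) $ i * cnj (?v $ i) = \<dots>" .
  qed
  finally show ?thesis by (simp add: tensor_pairing_def)
qed

lemma ctrace_mult: "A \<in> carrier_mat n n \<Longrightarrow> B \<in> carrier_mat n n \<Longrightarrow>
    ctrace (A * B) = (\<Sum>i<n. \<Sum>j<n. A $$ (i,j) * B $$ (j,i))"
  by (simp add: ctrace_def scalar_prod_def atLeast0LessThan)

lemma sic_shadow_carrier[simp]: "sic_shadow \<psi> N s \<in> carrier_mat (2^N) (2^N)"
  by (simp add: sic_shadow_def tensor_ops_def)

lemma sic_shadow_index: "i < 2^N \<Longrightarrow> j < 2^N \<Longrightarrow>
   sic_shadow \<psi> N s $$ (i,j) = (\<Prod>n<N. shadow_op (\<psi> (s n)) (qbit n i) (qbit n j))"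
  by (simp add: sic_shadow_def tensor_ops_def) (intro prod.cong refl, simp add: proj_def shadow_op_def outer_def)

lemma ctrace_mult_sic_shadow:
  assumes A: "A \<in> carrier_mat (2^N) (2^N)"
  shows "ctrace (A * sic_shadow \<psi> N s) = tensor_pairing N A (\<lambda>n. shadow_op (\<psi> (s n)))"
  using A by (simp add: ctrace_mult[OF A sic_shadow_carrier] sic_shadow_index tensor_pairing_def)

lemma tensor_pairing_cong:
  assumes "\<And>n a b. n < N \<Longrightarrow> a < 2 \<Longrightarrow> b < 2 \<Longrightarrow> g n a b = g' n a b"
  shows "tensor_pairing N A g = tensor_pairing N A g'"
  unfolding tensor_pairing_def using assms by (intro sum.cong refl arg_cong2[where f="(*)"] prod.cong) auto

lemma tensor_pairing_scale: "tensor_pairing N A (\<lambda>n a b. c n * g n a b) = (\<Prod>n<N. c n) * tensor_pairing N A g"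
  unfolding tensor_pairing_def by (simp add: prod.distrib sum_distrib_left mult_ac)

lemma tensor_pairing_delta:
  assumes "A \<in> carrier_mat (2^N) (2^N)"
  shows "tensor_pairing N A (\<lambda>n a b. if a = b then 1 else 0) = ctrace A"
proof -
  have "tensor_pairing N A (\<lambda>n a b. if a = b then 1 else 0) = (\<Sum>i<2^N. \<Sum>j<2^N. A $$ (i,j) * (if j = i then 1 else 0))"
    unfolding tensor_pairing_def by (intro sum.cong refl) (simp add: prod_qbit_delta)
  also have "\<dots> = ctrace A" using assms by (simp add: ctrace_def if_distrib sum.delta cong: if_cong)
  finally show ?thesis .
qed

lemma sum_PiE_tensor_pairing:
  assumes "\<And>n. finite (B n)"
  shows "(\<Sum>s\<in>PiE {..<N} B. tensor_pairing N A (\<lambda>n. h n (s n))) = tensor_pairing N A (\<lambda>n a b. \<Sum>x\<in>B n. h n x a b)"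
proof -
  have "(\<Sum>s\<in>PiE {..<N} B. tensor_pairing N A (\<lambda>n. h n (s n))) =
     (\<Sum>i<2^N. \<Sum>j<2^N. A $$ (i,j) * (\<Sum>s\<in>PiE {..<N} B. \<Prod>n<N. h n (s n) (qbit n j) (qbit n i)))"
    unfolding tensor_pairing_def
    by (subst sum.swap, rule sum.cong[OF refl], subst sum.swap) (simp add: sum_distrib_left)
  also have "\<dots> = tensor_pairing N A (\<lambda>n a b. \<Sum>x\<in>B n. h n x a b)"
    unfolding tensor_pairing_def using assms
    by (subst sum_PiE_prod[where f="\<lambda>n x. h n x (qbit n _) (qbit n _)"]) auto
  finally show ?thesis .
qed

lemma sum_PiE_tensor_pairing_mult:
  assumes "\<And>n. finite (B n)"
  shows "(\<Sum>s\<in>PiE {..<N} B. tensor_pairing N A (\<lambda>n. h n (s n)) * tensor_pairing N C (\<lambda>n. h' n (s n))) =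
    (\<Sum>i<2^N. \<Sum>j<2^N. \<Sum>k<2^N. \<Sum>l<2^N. A$$(i,j) * C$$(k,l) *
        (\<Prod>n<N. \<Sum>x\<in>B n. h n x (qbit n j) (qbit n i) * h' n x (qbit n l) (qbit n k)))"
proof -
  have "(\<Sum>s\<in>PiE {..<N} B. tensor_pairing N A (\<lambda>n. h n (s n)) * tensor_pairing N C (\<lambda>n. h' n (s n))) =
    (\<Sum>s\<in>PiE {..<N} B. \<Sum>i<2^N. \<Sum>j<2^N. \<Sum>k<2^N. \<Sum>l<2^N. A$$(i,j) * C$$(k,l) *
        (\<Prod>n<N. h n (s n) (qbit n j) (qbit n i) * h' n (s n) (qbit n l) (qbit n k)))"
  proof (rule sum.cong[OF refl])
    fix s
    show "tensor_pairing N A (\<lambda>n. h n (s n)) * tensor_pairing N C (\<lambda>n. h' n (s n)) = (\<Sum>i<2^N. \<Sum>j<2^N. \<Sum>k<2^N. \<Sum>l<2^N. A$$(i,j) * C$$(k,l) *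
        (\<Prod>n<N. h n (s n) (qbit n j) (qbit n i) * h' n (s n) (qbit n l) (qbit n k)))"
      unfolding tensor_pairing_def
      by (simp only: sum_distrib_right, simp only: sum_distrib_left, intro sum.cong refl,
          simp add: prod.distrib mult_ac)
  qed
  also have "\<dots> = (\<Sum>i<2^N. \<Sum>j<2^N. \<Sum>k<2^N. \<Sum>l<2^N. A$$(i,j) * C$$(k,l) *
        (\<Sum>s\<in>PiE {..<N} B. \<Prod>n<N. h n (s n) (qbit n j) (qbit n i) * h' n (s n) (qbit n l) (qbit n k)))"
    by (simp only: sum.swap[where A="PiE {..<N} B"] sum_distrib_left[symmetric])
  also have "\<dots> = (\<Sum>i<2^N. \<Sum>j<2^N. \<Sum>k<2^N. \<Sum>l<2^N. A$$(i,j) * C$$(k,l) *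
        (\<Prod>n<N. \<Sum>x\<in>B n. h n x (qbit n j) (qbit n i) * h' n x (qbit n l) (qbit n k)))"
    using assms by (subst sum_PiE_prod) auto
  finally show ?thesis .
qed

lemma sum_PiE_tensor_pairing_partial:
  assumes S: "S \<subseteq> {..<N}" and fin: "\<And>n. finite (B n)"
  shows "(\<Sum>u\<in>PiE ({..<N} - S) B. tensor_pairing N A (\<lambda>n. h n (override_on u t S n))) =
     tensor_pairing N A (\<lambda>n a b. if n \<in> S then h n (t n) a b else \<Sum>x\<in>B n. h n x a b)"
proof -
  define R where "R = {..<N} - S"
  have SR: "S \<inter> R = {}" "S \<union> R = {..<N}" using S by (auto simp: R_def)
  have finS: "finite S" "finite R" using S finite_subset by (auto simp: R_def)
  have split: "(\<Prod>n<N. F n) = (\<Prod>n\<in>S. F n) * (\<Prod>n\<in>R. F n)" for F :: "nat \<Rightarrow> complex"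
    using prod.union_disjoint[OF finS SR(1), of F] SR(2) by simp
  have "(\<Sum>u\<in>PiE R B. tensor_pairing N A (\<lambda>n. h n (override_on u t S n))) =
     (\<Sum>i<2^N. \<Sum>j<2^N. A $$ (i,j) * (\<Sum>u\<in>PiE R B. \<Prod>n<N. h n (override_on u t S n) (qbit n j) (qbit n i)))"
    unfolding tensor_pairing_def
    by (subst sum.swap, rule sum.cong[OF refl], subst sum.swap) (simp add: sum_distrib_left)
  also have "\<dots> = (\<Sum>i<2^N. \<Sum>j<2^N. A $$ (i,j) * ((\<Prod>n\<in>S. h n (t n) (qbit n j) (qbit n i)) *
         (\<Prod>n\<in>R. \<Sum>x\<in>B n. h n x (qbit n j) (qbit n i))))"
  proof (intro sum.cong refl arg_cong2[where f="(*)"])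
    fix i j
    have "(\<Sum>u\<in>PiE R B. \<Prod>n<N. h n (override_on u t S n) (qbit n j) (qbit n i)) =
          (\<Sum>u\<in>PiE R B. (\<Prod>n\<in>S. h n (t n) (qbit n j) (qbit n i)) * (\<Prod>n\<in>R. h n (u n) (qbit n j) (qbit n i)))"
      unfolding split using SR(1) by (intro sum.cong refl arg_cong2[where f="(*)"] prod.cong) (auto simp: override_on_def)
    also have "\<dots> = (\<Prod>n\<in>S. h n (t n) (qbit n j) (qbit n i)) * (\<Prod>n\<in>R. \<Sum>x\<in>B n. h n x (qbit n j) (qbit n i))"
      using finS fin sum_PiE_prod[of R B "\<lambda>n x. h n x (qbit n j) (qbit n i)"] by (simp add: sum_distrib_left[symmetric])
    finally show "(\<Sum>u\<in>PiE R B. \<Prod>n<N. h n (override_on u t S n) (qbit n j) (qbit n i)) = \<dots>" .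
  qed
  also have "\<dots> = tensor_pairing N A (\<lambda>n a b. if n \<in> S then h n (t n) a b else \<Sum>x\<in>B n. h n x a b)"
    unfolding tensor_pairing_def split using SR(1)
    by (intro sum.cong refl arg_cong2[where f="(*)"] prod.cong) (auto simp: R_def)
  finally show ?thesis by (simp add: R_def)
qed

lemma hermitian_cnj_index:
  assumes "hermitian A" "A \<in> carrier_mat n n" "i < n" "j < n"
  shows "cnj (A $$ (i,j)) = A $$ (j,i)"
proof -
  have "dagger A $$ (j,i) = cnj (A $$ (i,j))" using assms by (simp add: dagger_def)
  then show ?thesis using assms by (simp add: hermitian_def)
qed

lemma Im_tensor_pairing:
  assumes "hermitian A" "A \<in> carrier_mat (2^N) (2^N)" "\<And>n a b. cnj (g n a b) = g n b a"
  shows "Im (tensor_pairing N A g) = 0"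
proof -
  have "cnj (tensor_pairing N A g) = (\<Sum>i<2^N. \<Sum>j<2^N. A $$ (j,i) * (\<Prod>n<N. g n (qbit n i) (qbit n j)))"
    unfolding tensor_pairing_def cnj_sum complex_cnj_mult cnj_prod
    using assms by (intro sum.cong refl) (simp add: hermitian_cnj_index)
  also have "\<dots> = tensor_pairing N A g" unfolding tensor_pairing_def by (rule sum.swap)
  finally show ?thesis by (metis Reals_cnj_iff complex_is_Real_iff)
qed

lemma Im_ctrace_hermitian_mult:
  assumes "hermitian A" "A \<in> carrier_mat n n" "hermitian B" "B \<in> carrier_mat n n"
  shows "Im (ctrace (A * B)) = 0"
proof -
  have "cnj (ctrace (A * B)) = (\<Sum>i<n. \<Sum>j<n. A $$ (j,i) * B $$ (i,j))"
    unfolding ctrace_mult[OF assms(2,4)] cnj_sum complex_cnj_mult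
    using assms by (intro sum.cong refl) (simp add: hermitian_cnj_index)
  also have "\<dots> = ctrace (A * B)" unfolding ctrace_mult[OF assms(2,4)] by (rule sum.swap)
  finally show ?thesis by (metis Reals_cnj_iff complex_is_Real_iff)
qed

section \<open>The SIC frame and 2-design identities\<close>

lemma sum_cmod_sq_diff_expand:
  fixes f :: "'t \<Rightarrow> 'a \<Rightarrow> complex" and g :: "'a \<Rightarrow> complex"
  shows "complex_of_real (\<Sum>a\<in>A. (cmod ((\<Sum>t\<in>T. f t a) - g a))^2) =
     (\<Sum>t\<in>T. \<Sum>t'\<in>T. \<Sum>a\<in>A. f t a * cnj (f t' a)) - (\<Sum>t\<in>T. \<Sum>a\<in>A. f t a * cnj (g a))
      - cnj (\<Sum>t\<in>T. \<Sum>a\<in>A. f t a * cnj (g a)) + (\<Sum>a\<in>A. g a * cnj (g a))"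
proof -
  have "complex_of_real (\<Sum>a\<in>A. (cmod ((\<Sum>t\<in>T. f t a) - g a))^2) =
     (\<Sum>a\<in>A. ((\<Sum>t\<in>T. f t a) - g a) * cnj ((\<Sum>t\<in>T. f t a) - g a))"
    by (simp only: of_real_sum complex_norm_square)
  also have "\<dots> = (\<Sum>a\<in>A. (\<Sum>t\<in>T. f t a) * cnj (\<Sum>t\<in>T. f t a)) - (\<Sum>a\<in>A. (\<Sum>t\<in>T. f t a) * cnj (g a))
      - (\<Sum>a\<in>A. g a * cnj (\<Sum>t\<in>T. f t a)) + (\<Sum>a\<in>A. g a * cnj (g a))"
    by (simp add: algebra_simps sum_subtractf sum.distrib)
  also have "(\<Sum>a\<in>A. (\<Sum>t\<in>T. f t a) * cnj (\<Sum>t\<in>T. f t a)) = (\<Sum>t\<in>T. \<Sum>t'\<in>T. \<Sum>a\<in>A. f t a * cnj (f t' a))"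
    by (simp add: cnj_sum sum_product, subst sum.swap, rule sum.cong[OF refl], subst sum.swap, simp)
  also have "(\<Sum>a\<in>A. (\<Sum>t\<in>T. f t a) * cnj (g a)) = (\<Sum>t\<in>T. \<Sum>a\<in>A. f t a * cnj (g a))"
    by (simp add: sum_distrib_right, subst sum.swap, simp)
  also have "(\<Sum>a\<in>A. g a * cnj (\<Sum>t\<in>T. f t a)) = cnj (\<Sum>t\<in>T. \<Sum>a\<in>A. f t a * cnj (g a))"
    by (simp add: cnj_sum sum_distrib_left mult.commute, subst sum.swap, simp)
  finally show ?thesis .
qed

text \<open>The frame and 2-design identities of a SIC set are proved by showing that the squared
  Hilbert-Schmidt distance between the two sides vanishes; expanding it needs only the overlaps
  \<open>|\<langle>\<psi>\<^sub>t, \<psi>\<^sub>t'\<rangle>|\<^sup>2\<close>.\<close>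

lemma sum_eq_of_hs_dist_zero:
  fixes f :: "'t \<Rightarrow> 'a \<Rightarrow> complex" and g :: "'a \<Rightarrow> complex"
  assumes "finite A" "a \<in> A"
    and "(\<Sum>t\<in>T. \<Sum>t'\<in>T. \<Sum>a\<in>A. f t a * cnj (f t' a)) = c"
    and "(\<Sum>t\<in>T. \<Sum>a\<in>A. f t a * cnj (g a)) = c"
    and "(\<Sum>a\<in>A. g a * cnj (g a)) = c"
  shows "(\<Sum>t\<in>T. f t a) = g a"
proof -
  have "cnj c = c" unfolding assms(5)[symmetric] by (simp add: cnj_sum mult.commute)
  then have "complex_of_real (\<Sum>a\<in>A. (cmod ((\<Sum>t\<in>T. f t a) - g a))^2) = 0"
    unfolding sum_cmod_sq_diff_expand assms(3-5) by simp
  then have "(\<Sum>a\<in>A. (cmod ((\<Sum>t\<in>T. f t a) - g a))^2) = 0" by (simp only: of_real_eq_0_iff)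
  then have "(cmod ((\<Sum>t\<in>T. f t a) - g a))^2 = 0"
    using assms(1,2) by (subst (asm) sum_nonneg_eq_0_iff) auto
  then show ?thesis by simp
qed

definition inner2 :: "complex vec \<Rightarrow> complex vec \<Rightarrow> complex" where
  "inner2 x y = (\<Sum>a<2. x $ a * cnj (y $ a))"

lemma cscalar_prod_eq_inner2: "x \<in> carrier_vec 2 \<Longrightarrow> y \<in> carrier_vec 2 \<Longrightarrow> x \<bullet>c y = inner2 x y"
  by (simp add: scalar_prod_def inner2_def atLeast0LessThan)

lemma vnorm_eq_1_inner2:
  assumes "x \<in> carrier_vec 2" "vnorm x = 1"
  shows "inner2 x x = 1" "(\<Sum>a<2. (cmod (x $ a))^2) = 1"
proof -
  have s: "sqrt (\<Sum>a<2. (cmod (x $ a))^2) = 1" using assms by (simp add: vnorm_def)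
  then show *: "(\<Sum>a<2. (cmod (x $ a))^2) = 1"
    by (metis real_sqrt_eq_1_iff)
  have "inner2 x x = complex_of_real (\<Sum>a<2. (cmod (x $ a))^2)"
    by (simp only: inner2_def complex_norm_square of_real_sum)
  then show "inner2 x x = 1" using * by simp
qed

lemma sum_outer_cnj_outer: "(\<Sum>a<2. \<Sum>b<2. outer x a b * cnj (outer y a b)) = inner2 x y * cnj (inner2 x y)"
  by (simp add: outer_def inner2_def sum_product cnj_sum mult_ac)

lemma sic_setD:
  assumes "sic_set \<psi>"
  shows "\<And>t. t < 4 \<Longrightarrow> \<psi> t \<in> carrier_vec 2"
    and "\<And>t. t < 4 \<Longrightarrow> inner2 (\<psi> t) (\<psi> t) = 1"
    and "\<And>t. t < 4 \<Longrightarrow> (\<Sum>a<2. (cmod (\<psi> t $ a))^2) = 1"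
    and "\<And>t t'. t < 4 \<Longrightarrow> t' < 4 \<Longrightarrow> inner2 (\<psi> t) (\<psi> t') * cnj (inner2 (\<psi> t) (\<psi> t')) = (if t = t' then 1 else 1/3)"
proof -
  show c: "\<And>t. t < 4 \<Longrightarrow> \<psi> t \<in> carrier_vec 2" using assms by (simp add: sic_set_def)
  show i: "\<And>t. t < 4 \<Longrightarrow> inner2 (\<psi> t) (\<psi> t) = 1" using assms vnorm_eq_1_inner2 by (simp add: sic_set_def)
  show "\<And>t. t < 4 \<Longrightarrow> (\<Sum>a<2. (cmod (\<psi> t $ a))^2) = 1" using assms vnorm_eq_1_inner2 by (simp add: sic_set_def)
  fix t t' :: nat assume tt: "t < 4" "t' < 4"
  show "inner2 (\<psi> t) (\<psi> t') * cnj (inner2 (\<psi> t) (\<psi> t')) = (if t = t' then 1 else 1/3)"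
  proof (cases "t = t'")
    case True then show ?thesis using i tt by simp
  next
    case False
    then have "(cmod (inner2 (\<psi> t) (\<psi> t')))^2 = 1/3"
      using assms tt c cscalar_prod_eq_inner2 by (simp add: sic_set_def)
    then have "complex_of_real ((cmod (inner2 (\<psi> t) (\<psi> t')))^2) = complex_of_real (1/3)" by (simp only:)
    then have "inner2 (\<psi> t) (\<psi> t') * cnj (inner2 (\<psi> t) (\<psi> t')) = 1/3"
      by (simp only: complex_norm_square) simp
    then show ?thesis using False by simp
  qed
qed

lemma sic_frame:
  assumes "sic_set \<psi>" "a < 2" "b < 2"
  shows "(\<Sum>t<4. outer (\<psi> t) a b) = (if a = b then 2 else 0)"
proof -
  note B = sic_setD[OF assms(1)]
  let ?A = "{..<2::nat} \<times> {..<2::nat}"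
  let ?f = "\<lambda>t p. outer (\<psi> t) (fst p) (snd p)"
  let ?g = "\<lambda>p::nat\<times>nat. if fst p = snd p then 2 else 0 :: complex"
  have S1: "(\<Sum>t<4. \<Sum>t'<4. \<Sum>p\<in>?A. ?f t p * cnj (?f t' p)) = 8"
  proof -
    have "(\<Sum>t<4. \<Sum>t'<4. \<Sum>p\<in>?A. ?f t p * cnj (?f t' p)) =
          (\<Sum>t<4. \<Sum>t'<4. inner2 (\<psi> t) (\<psi> t') * cnj (inner2 (\<psi> t) (\<psi> t')))"
      by (intro sum.cong refl) (simp add: sum_Times sum_outer_cnj_outer)
    also have "\<dots> = (\<Sum>t<(4::nat). \<Sum>t'<(4::nat). (if t = t' then 1 else 1/3 :: complex))"
      using B(4) by (intro sum.cong refl) auto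
    also have "\<dots> = 8" by (simp add: sum_lessThan_4)
    finally show ?thesis .
  qed
  have S2: "(\<Sum>t<4. \<Sum>p\<in>?A. ?f t p * cnj (?g p)) = 8"
  proof -
    have "(\<Sum>t<4. \<Sum>p\<in>?A. ?f t p * cnj (?g p)) = (\<Sum>t<4. 2 * inner2 (\<psi> t) (\<psi> t))"
      by (intro sum.cong refl) (simp add: sum_Times sum_lessThan_2 inner2_def outer_def)
    also have "\<dots> = 8" using B(2) by (simp add: sum_lessThan_4)
    finally show ?thesis .
  qed
  have S3: "(\<Sum>p\<in>?A. ?g p * cnj (?g p)) = 8"
    by (simp add: sum_Times sum_lessThan_2)
  show ?thesis
    using sum_eq_of_hs_dist_zero[OF _ _ S1 S2 S3, of "(a,b)"] assms by simp
qed

definition design2 :: "nat \<Rightarrow> nat \<Rightarrow> nat \<Rightarrow> nat \<Rightarrow> complex" where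
  "design2 a b c d = 2/3 * ((if a = b \<and> c = d then 1 else 0) + (if a = d \<and> c = b then 1 else 0))"

lemma sic_2design:
  assumes "sic_set \<psi>" "a < 2" "b < 2" "c < 2" "d < 2"
  shows "(\<Sum>t<4. outer (\<psi> t) a b * outer (\<psi> t) c d) = design2 a b c d"
proof -
  note B = sic_setD[OF assms(1)]
  let ?A = "({..<2::nat} \<times> {..<2::nat}) \<times> ({..<2::nat} \<times> {..<2::nat})"
  let ?f = "\<lambda>t pq. outer (\<psi> t) (fst (fst pq)) (snd (fst pq)) * outer (\<psi> t) (fst (snd pq)) (snd (snd pq))"
  let ?g = "\<lambda>pq. design2 (fst (fst pq)) (snd (fst pq)) (fst (snd pq)) (snd (snd pq))"
  have S1: "(\<Sum>t<4. \<Sum>t'<4. \<Sum>p\<in>?A. ?f t p * cnj (?f t' p)) = 16/3"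
  proof -
    have "(\<Sum>t<4. \<Sum>t'<4. \<Sum>p\<in>?A. ?f t p * cnj (?f t' p)) =
          (\<Sum>t<4. \<Sum>t'<4. (inner2 (\<psi> t) (\<psi> t') * cnj (inner2 (\<psi> t) (\<psi> t')))^2)"
    proof (intro sum.cong refl)
      fix t t'
      have "(\<Sum>p\<in>?A. ?f t p * cnj (?f t' p)) =
         (\<Sum>p\<in>{..<2::nat} \<times> {..<2::nat}. outer (\<psi> t) (fst p) (snd p) * cnj (outer (\<psi> t') (fst p) (snd p))) *
         (\<Sum>q\<in>{..<2::nat} \<times> {..<2::nat}. outer (\<psi> t) (fst q) (snd q) * cnj (outer (\<psi> t') (fst q) (snd q)))"
        by (simp add: sum.cartesian_product sum_product mult_ac split_beta)
      also have "\<dots> = (inner2 (\<psi> t) (\<psi> t') * cnj (inner2 (\<psi> t) (\<psi> t')))^2"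
        by (simp add: sum_Times sum_outer_cnj_outer power2_eq_square)
      finally show "(\<Sum>p\<in>?A. ?f t p * cnj (?f t' p)) = (inner2 (\<psi> t) (\<psi> t') * cnj (inner2 (\<psi> t) (\<psi> t')))^2" .
    qed
    also have "\<dots> = (\<Sum>t<(4::nat). \<Sum>t'<(4::nat). (if t = t' then 1 else 1/9 :: complex))"
      using B(4) by (intro sum.cong refl) (auto simp: power2_eq_square)
    also have "\<dots> = 16/3" by (simp add: sum_lessThan_4)
    finally show ?thesis .
  qed
  have S2: "(\<Sum>t<4. \<Sum>p\<in>?A. ?f t p * cnj (?g p)) = 16/3"
  proof -
    have "(\<Sum>t<4. \<Sum>p\<in>?A. ?f t p * cnj (?g p)) = (\<Sum>t<4. 4/3 * (inner2 (\<psi> t) (\<psi> t))^2)"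
    proof (intro sum.cong refl)
      fix t
      show "(\<Sum>p\<in>?A. ?f t p * cnj (?g p)) = 4/3 * (inner2 (\<psi> t) (\<psi> t))^2"
        by (simp add: sum_Times sum_lessThan_2 outer_def inner2_def design2_def power2_eq_square algebra_simps)
    qed
    also have "\<dots> = 16/3" using B(2) by (simp add: sum_lessThan_4)
    finally show ?thesis .
  qed
  have S3: "(\<Sum>p\<in>?A. ?g p * cnj (?g p)) = 16/3"
    by (simp add: sum_Times sum_lessThan_2 design2_def)
  show ?thesis
    using sum_eq_of_hs_dist_zero[OF _ _ S1 S2 S3, of "((a,b),(c,d))"] assms by simp
qed

lemma sum_sic_outer_shadow_op:
  assumes "sic_set \<psi>" "j < 2" "i < 2" "l < 2" "k < 2"
  shows "(\<Sum>x<4. outer (\<psi> x) j i * shadow_op (\<psi> x) l k) = 2 * ((if j = k then 1 else 0) * (if l = i then 1 else 0))"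
proof -
  have "(\<Sum>x<4. outer (\<psi> x) j i * shadow_op (\<psi> x) l k) =
        3 * (\<Sum>x<4. outer (\<psi> x) j i * outer (\<psi> x) l k) - (if l = k then 1 else 0) * (\<Sum>x<4. outer (\<psi> x) j i)"
    by (simp add: shadow_op_def algebra_simps sum_subtractf sum_distrib_left sum_distrib_right)
  also have "\<dots> = 3 * design2 j i l k - (if l = k then 1 else 0) * (if j = i then 2 else 0)"
    using assms by (simp add: sic_2design sic_frame)
  also have "\<dots> = 2 * ((if j = k then 1 else 0) * (if l = i then 1 else 0))"
    by (auto simp: design2_def)
  finally show ?thesis .
qed

lemma sum_sic_shadow_op_cnj:
  assumes "sic_set \<psi>" "a' < 2" "a < 2" "c' < 2" "c < 2"
  shows "(\<Sum>x<4. shadow_op (\<psi> x) a' a * cnj (shadow_op (\<psi> x) c' c)) =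
     6 * ((if a' = c' then 1 else 0) * (if a = c then 1 else 0)) - 2 * ((if a' = a then 1 else 0) * (if c = c' then 1 else 0))"
proof -
  have cs: "cnj (shadow_op v c' c) = shadow_op v c c'" for v
    by (simp add: shadow_op_def outer_def)
  have "(\<Sum>x<4. shadow_op (\<psi> x) a' a * cnj (shadow_op (\<psi> x) c' c)) =
     9 * (\<Sum>x<4. outer (\<psi> x) a' a * outer (\<psi> x) c c') - 3 * (if c = c' then 1 else 0) * (\<Sum>x<4. outer (\<psi> x) a' a)
       - 3 * (if a' = a then 1 else 0) * (\<Sum>x<4. outer (\<psi> x) c c') + 4 * ((if a' = a then 1 else 0) * (if c = c' then 1 else 0))"
    unfolding cs by (simp add: shadow_op_def algebra_simps sum_subtractf sum.distrib sum_distrib_left sum_distrib_right sum_lessThan_4)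
  also have "\<dots> = 9 * design2 a' a c c' - 3 * (if c = c' then 1 else 0) * (if a' = a then 2 else 0)
       - 3 * (if a' = a then 1 else 0) * (if c = c' then 2 else 0) + 4 * ((if a' = a then 1 else 0) * (if c = c' then 1 else 0))"
    using assms by (simp add: sic_2design sic_frame)
  also have "\<dots> = 6 * ((if a' = c' then 1 else 0) * (if a = c then 1 else 0)) - 2 * ((if a' = a then 1 else 0) * (if c = c' then 1 else 0))"
    by (auto simp: design2_def)
  finally show ?thesis .
qed

lemma shadow_op_trace:
  assumes "inner2 v v = 1"
  shows "shadow_op v 0 0 + shadow_op v 1 1 = 1"
proof -
  have "shadow_op v 0 0 + shadow_op v 1 1 = 3 * inner2 v v - 2"
    by (simp add: shadow_op_def outer_def inner2_def sum_lessThan_2 algebra_simps)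
  then show ?thesis using assms by simp
qed

lemma cnj_shadow_op: "cnj (shadow_op v a b) = shadow_op v b a"
  by (simp add: shadow_op_def outer_def)

section \<open>Unbiasedness of SIC shadows\<close>

lemma outcomes_eq_PiE: "outcomes N = PiE {..<N} (\<lambda>_. {..<4})"
  by (simp add: outcomes_def atLeast0LessThan)

lemma finite_outcomes: "finite (outcomes N)"
  by (simp add: outcomes_def finite_PiE)

lemma outcomes_less_4: "s \<in> outcomes N \<Longrightarrow> n < N \<Longrightarrow> s n < 4"
  by (auto simp: outcomes_def dest: PiE_mem)

lemma sic_pairing_unbiased:
  assumes "sic_set \<psi>" "\<rho> \<in> carrier_mat (2^N) (2^N)" "Ob \<in> carrier_mat (2^N) (2^N)"
  shows "(\<Sum>s\<in>outcomes N. tensor_pairing N \<rho> (\<lambda>n. outer (\<psi> (s n))) * tensor_pairing N Ob (\<lambda>n. shadow_op (\<psi> (s n)))) = 2^N * ctrace (Ob * \<rho>)"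
proof -
  have "(\<Sum>s\<in>outcomes N. tensor_pairing N \<rho> (\<lambda>n. outer (\<psi> (s n))) * tensor_pairing N Ob (\<lambda>n. shadow_op (\<psi> (s n)))) =
    (\<Sum>i<2^N. \<Sum>j<2^N. \<Sum>k<2^N. \<Sum>l<2^N. \<rho>$$(i,j) * Ob$$(k,l) *
        (\<Prod>n<N. \<Sum>x<4. outer (\<psi> x) (qbit n j) (qbit n i) * shadow_op (\<psi> x) (qbit n l) (qbit n k)))"
    unfolding outcomes_eq_PiE by (rule sum_PiE_tensor_pairing_mult) simp
  also have "\<dots> = (\<Sum>i<2^N. \<Sum>j<2^N. \<rho>$$(i,j) * (\<Sum>k<2^N. \<Sum>l<2^N. Ob$$(k,l) *
        (\<Prod>n<N. 2 * ((if qbit n j = qbit n k then 1 else 0) * (if qbit n l = qbit n i then 1 else 0)))))"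
    using assms(1) by (simp add: sum_sic_outer_shadow_op sum_distrib_left mult.assoc)
  also have "\<dots> = (\<Sum>i<2^N. \<Sum>j<2^N. \<rho>$$(i,j) * (2^N * Ob$$(j,i)))"
    by (intro sum.cong refl) (simp add: sum_qbit_delta_collapse)
  also have "\<dots> = 2^N * ctrace (Ob * \<rho>)"
    using assms by (simp add: ctrace_mult sum_distrib_left mult_ac, subst sum.swap, simp)
  finally show ?thesis .
qed

lemma sic_pairing_total:
  assumes "sic_set \<psi>" "\<rho> \<in> carrier_mat (2^N) (2^N)"
  shows "(\<Sum>s\<in>outcomes N. tensor_pairing N \<rho> (\<lambda>n. outer (\<psi> (s n)))) = 2^N * ctrace \<rho>"
proof -
  have "(\<Sum>s\<in>outcomes N. tensor_pairing N \<rho> (\<lambda>n. outer (\<psi> (s n)))) = tensor_pairing N \<rho> (\<lambda>n a b. \<Sum>x<4. outer (\<psi> x) a b)"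
    unfolding outcomes_eq_PiE by (rule sum_PiE_tensor_pairing) simp
  also have "\<dots> = (\<Sum>i<2^N. \<Sum>j<2^N. \<rho>$$(i,j) * (\<Prod>n<N. (if qbit n j = qbit n i then 2 else 0)))"
    unfolding tensor_pairing_def using assms(1) by (simp add: sic_frame)
  also have "\<dots> = (\<Sum>i<2^N. \<Sum>j<2^N. \<rho>$$(i,j) * (2^N * (if j = i then 1 else 0)))"
    by (intro sum.cong refl) (simp only: prod_if_2, simp add: prod_qbit_delta)
  also have "\<dots> = 2^N * ctrace \<rho>"
    using assms by (simp add: ctrace_def if_distrib sum.delta sum_distrib_left mult.commute cong: if_cong)
  finally show ?thesis .
qed

lemma density_tensor_pairing_outer:
  assumes "density_matrix N \<rho>"
  shows "Im (tensor_pairing N \<rho> (\<lambda>n. outer (w n))) = 0" "0 \<le> Re (tensor_pairing N \<rho> (\<lambda>n. outer (w n)))"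
proof -
  have c: "\<rho> \<in> carrier_mat (2^N) (2^N)" using assms by (simp add: density_matrix_def)
  have "tensor_pairing N \<rho> (\<lambda>n. outer (w n)) = (\<rho> *\<^sub>v tensor_vecs N w) \<bullet>c tensor_vecs N w"
    using quad_form_tensor_vecs[OF c] by simp
  then show "Im (tensor_pairing N \<rho> (\<lambda>n. outer (w n))) = 0" "0 \<le> Re (tensor_pairing N \<rho> (\<lambda>n. outer (w n)))"
    using assms by (auto simp: density_matrix_def)
qed

lemma sic_prob_eq_tensor_pairing:
  assumes "density_matrix N \<rho>"
  shows "sic_prob \<psi> N \<rho> s = Re (tensor_pairing N \<rho> (\<lambda>n. outer (\<psi> (s n)))) / 2^N"
  using assms unfolding sic_prob_def Let_def density_matrix_def by (simp add: quad_form_tensor_vecs)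

lemma sic_prob_nonneg: "density_matrix N \<rho> \<Longrightarrow> 0 \<le> sic_prob \<psi> N \<rho> s"
  unfolding sic_prob_eq_tensor_pairing by (simp add: density_tensor_pairing_outer(2))

lemma tensor_pairing_sic_prob:
  assumes "density_matrix N \<rho>"
  shows "tensor_pairing N \<rho> (\<lambda>n. outer (\<psi> (s n))) = complex_of_real (2^N * sic_prob \<psi> N \<rho> s)"
  using density_tensor_pairing_outer(1)[OF assms, of "\<lambda>n. \<psi> (s n)"]
  unfolding sic_prob_eq_tensor_pairing[OF assms] by (simp add: complex_eq_iff)

lemma sic_prob_sum:
  assumes "sic_set \<psi>" "density_matrix N \<rho>"
  shows "(\<Sum>s\<in>outcomes N. sic_prob \<psi> N \<rho> s) = 1"
proof -
  have c: "\<rho> \<in> carrier_mat (2^N) (2^N)" "ctrace \<rho> = 1" using assms by (auto simp: density_matrix_def)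
  have "complex_of_real (2^N * (\<Sum>s\<in>outcomes N. sic_prob \<psi> N \<rho> s)) = 2^N * ctrace \<rho>"
    using sic_pairing_total[OF assms(1) c(1)] tensor_pairing_sic_prob[OF assms(2)] by (simp add: sum_distrib_left)
  then have "complex_of_real (2^N * (\<Sum>s\<in>outcomes N. sic_prob \<psi> N \<rho> s)) = complex_of_real (2^N)"
    using c(2) by simp
  then have "(2::real)^N * (\<Sum>s\<in>outcomes N. sic_prob \<psi> N \<rho> s) = 2^N" by (simp only: of_real_eq_iff)
  then show ?thesis by simp
qed

lemma sic_shadow_unbiased:
  assumes "sic_set \<psi>" "density_matrix N \<rho>" "Ob \<in> carrier_mat (2^N) (2^N)"
  shows "(\<Sum>s\<in>outcomes N. complex_of_real (sic_prob \<psi> N \<rho> s) * ctrace (Ob * sic_shadow \<psi> N s)) = ctrace (Ob * \<rho>)"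
proof -
  have c: "\<rho> \<in> carrier_mat (2^N) (2^N)" using assms by (auto simp: density_matrix_def)
  have "2^N * (\<Sum>s\<in>outcomes N. complex_of_real (sic_prob \<psi> N \<rho> s) * ctrace (Ob * sic_shadow \<psi> N s)) = 2^N * ctrace (Ob * \<rho>)"
    using sic_pairing_unbiased[OF assms(1) c assms(3)] tensor_pairing_sic_prob[OF assms(2)] ctrace_mult_sic_shadow[OF assms(3)]
    by (simp add: sum_distrib_left mult.assoc)
  then show ?thesis by simp
qed

section \<open>Local observables\<close>

text \<open>\<open>local_block S OS\<close> is the operator \<open>O\<^sub>S\<close> of \<open>acts_on\<close>, indexed by bit strings on \<open>S\<close>.\<close>

definition local_block :: "nat set \<Rightarrow> ((nat\<Rightarrow>bool)\<Rightarrow>(nat\<Rightarrow>bool)\<Rightarrow>complex) \<Rightarrow> (nat\<Rightarrow>nat) \<Rightarrow> (nat\<Rightarrow>nat) \<Rightarrow> complex" where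
  "local_block S OS a a' = OS (\<lambda>n. n \<in> S \<and> a n = 1) (\<lambda>n. n \<in> S \<and> a' n = 1)"

definition local_op :: "nat \<Rightarrow> nat set \<Rightarrow> ((nat\<Rightarrow>bool)\<Rightarrow>(nat\<Rightarrow>bool)\<Rightarrow>complex) \<Rightarrow> complex mat" where
  "local_op N S OS = mat (2 ^ N) (2 ^ N) (\<lambda>(i, j).
              if (\<forall>n \<in> {0..<N} - S. qbit n i = qbit n j)
              then OS (restr_bits S i) (restr_bits S j) else 0)"

lemma acts_on_local_op: "acts_on N S A \<Longrightarrow> S \<subseteq> {..<N} \<and> (\<exists>OS. A = local_op N S OS)"
  unfolding acts_on_def local_op_def by (auto simp: atLeast0LessThan)

lemma local_op_carrier[simp]: "local_op N S OS \<in> carrier_mat (2^N) (2^N)"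
  by (simp add: local_op_def)

lemma local_op_index:
  assumes "S \<subseteq> {..<N}" "i < 2^N" "j < 2^N"
  shows "local_op N S OS $$ (i,j) = (if \<forall>n\<in>{..<N} - S. bitvec_of N i n = bitvec_of N j n
    then OS (\<lambda>n. n \<in> S \<and> bitvec_of N i n = 1) (\<lambda>n. n \<in> S \<and> bitvec_of N j n = 1) else 0)"
proof -
  have "restr_bits S k = (\<lambda>n. n \<in> S \<and> bitvec_of N k n = 1)" for k
    using assms(1) by (auto simp: restr_bits_def fun_eq_iff)
  moreover have "(\<forall>n \<in> {0..<N} - S. qbit n i = qbit n j) = (\<forall>n\<in>{..<N} - S. bitvec_of N i n = bitvec_of N j n)"
    by auto
  ultimately show ?thesis using assms(2,3) unfolding local_op_def by simp
qed

lemma sum_local_op_entries: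
  fixes \<Phi> :: "complex \<Rightarrow> (nat \<Rightarrow> nat) \<Rightarrow> (nat \<Rightarrow> nat) \<Rightarrow> 'b :: comm_ring_1"
  assumes S: "S \<subseteq> {..<N}" and Z: "\<And>b b'. \<Phi> 0 b b' = 0"
  shows "(\<Sum>i<2^N. \<Sum>j<2^N. \<Phi> (local_op N S OS $$ (i,j)) (bitvec_of N i) (bitvec_of N j)) =
     (\<Sum>a\<in>bitvecs S. \<Sum>a'\<in>bitvecs S. \<Sum>c\<in>bitvecs ({..<N} - S). \<Phi> (local_block S OS a a') (override_on c a S) (override_on c a' S))"
proof -
  define R where "R = {..<N} - S"
  have SR: "S \<inter> R = {}" "S \<union> R = {..<N}" using S by (auto simp: R_def)
  define Oc where "Oc b b' = (if \<forall>n\<in>R. b n = b' n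
      then OS (\<lambda>n. n \<in> S \<and> b n = 1) (\<lambda>n. n \<in> S \<and> b' n = 1) else 0)" for b b' :: "nat \<Rightarrow> nat"
  have Oeq: "local_op N S OS $$ (i,j) = Oc (bitvec_of N i) (bitvec_of N j)" if "i < 2^N" "j < 2^N" for i j
    unfolding local_op_index[OF S that] Oc_def R_def ..
  have "(\<Sum>i<2^N. \<Sum>j<2^N. \<Phi> (local_op N S OS $$ (i,j)) (bitvec_of N i) (bitvec_of N j)) =
        (\<Sum>b\<in>bitvecs {..<N}. \<Sum>b'\<in>bitvecs {..<N}. \<Phi> (Oc b b') b b')"
  proof (rule sum_reindex_bitvec_of)
    fix i :: nat assume i: "i < 2^N"
    show "(\<Sum>j<2^N. \<Phi> (local_op N S OS $$ (i,j)) (bitvec_of N i) (bitvec_of N j)) = (\<Sum>b'\<in>bitvecs {..<N}. \<Phi> (Oc (bitvec_of N i) b') (bitvec_of N i) b')"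
      by (rule sum_reindex_bitvec_of) (simp add: Oeq i)
  qed
  also have "\<dots> = (\<Sum>a\<in>bitvecs S. \<Sum>c\<in>bitvecs R. \<Sum>a'\<in>bitvecs S. \<Sum>c'\<in>bitvecs R.
       \<Phi> (Oc (override_on c a S) (override_on c' a' S)) (override_on c a S) (override_on c' a' S))"
    unfolding SR(2)[symmetric] sum_PiE_union[OF SR(1)] by simp
  also have "\<dots> = (\<Sum>a\<in>bitvecs S. \<Sum>c\<in>bitvecs R. \<Sum>a'\<in>bitvecs S. \<Sum>c'\<in>bitvecs R.
       if c' = c then \<Phi> (local_block S OS a a') (override_on c a S) (override_on c a' S) else 0)"
  proof (intro sum.cong refl)
    fix a c a' c' assume a: "a \<in> bitvecs S" and c: "c \<in> bitvecs R" and a': "a' \<in> bitvecs S" and c': "c' \<in> bitvecs R"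
    have e: "(\<forall>n\<in>R. override_on c a S n = override_on c' a' S n) = (c' = c)"
    proof
      assume "\<forall>n\<in>R. override_on c a S n = override_on c' a' S n"
      then have "\<forall>n\<in>R. c n = c' n" using SR(1) by (auto simp: override_on_def) (metis disjoint_iff)
      then show "c' = c" using c c' by (metis PiE_ext)
    qed (use SR(1) in \<open>auto simp: override_on_def\<close>)
    have m: "(\<lambda>n. n \<in> S \<and> override_on y x S n = 1) = (\<lambda>n. n \<in> S \<and> x n = 1)" for x y
      by (auto simp: override_on_def fun_eq_iff)
    show "\<Phi> (Oc (override_on c a S) (override_on c' a' S)) (override_on c a S) (override_on c' a' S) =
       (if c' = c then \<Phi> (local_block S OS a a') (override_on c a S) (override_on c a' S) else 0)"
      unfolding Oc_def e m local_block_def using Z by auto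
  qed
  also have "\<dots> = (\<Sum>a\<in>bitvecs S. \<Sum>c\<in>bitvecs R. \<Sum>a'\<in>bitvecs S. \<Phi> (local_block S OS a a') (override_on c a S) (override_on c a' S))"
    using SR by (intro sum.cong refl) (simp add: sum.delta finite_PiE R_def)
  also have "\<dots> = (\<Sum>a\<in>bitvecs S. \<Sum>a'\<in>bitvecs S. \<Sum>c\<in>bitvecs R. \<Phi> (local_block S OS a a') (override_on c a S) (override_on c a' S))"
    by (rule sum.cong[OF refl]) (rule sum.swap)
  finally show ?thesis by (simp add: R_def)
qed

definition local_pairing :: "nat set \<Rightarrow> ((nat\<Rightarrow>bool)\<Rightarrow>(nat\<Rightarrow>bool)\<Rightarrow>complex) \<Rightarrow> (nat \<Rightarrow> nat \<Rightarrow> nat \<Rightarrow> complex) \<Rightarrow> complex" where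
  "local_pairing S OS g = (\<Sum>a\<in>bitvecs S. \<Sum>a'\<in>bitvecs S. local_block S OS a a' * (\<Prod>n\<in>S. g n (a' n) (a n)))"

lemma tensor_pairing_local_op:
  assumes S: "S \<subseteq> {..<N}"
  shows "tensor_pairing N (local_op N S OS) g = local_pairing S OS g * (\<Prod>n\<in>{..<N}-S. \<Sum>x<2. g n x x)"
proof -
  define R where "R = {..<N} - S"
  have SR: "S \<inter> R = {}" "S \<union> R = {..<N}" using S by (auto simp: R_def)
  have fin: "finite S" "finite R" using S finite_subset by (auto simp: R_def)
  have "tensor_pairing N (local_op N S OS) g = (\<Sum>i<2^N. \<Sum>j<2^N. (\<lambda>x b b'. x * (\<Prod>n<N. g n (b' n) (b n))) (local_op N S OS $$ (i,j)) (bitvec_of N i) (bitvec_of N j))"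
    unfolding tensor_pairing_def by (intro sum.cong refl) simp
  also have "\<dots> = (\<Sum>a\<in>bitvecs S. \<Sum>a'\<in>bitvecs S. \<Sum>c\<in>bitvecs R. local_block S OS a a' * (\<Prod>n<N. g n (override_on c a' S n) (override_on c a S n)))"
    unfolding R_def by (subst sum_local_op_entries[OF S]) auto
  also have "\<dots> = (\<Sum>a\<in>bitvecs S. \<Sum>a'\<in>bitvecs S. local_block S OS a a' * (\<Prod>n\<in>S. g n (a' n) (a n)) * (\<Sum>c\<in>bitvecs R. \<Prod>n\<in>R. g n (c n) (c n)))"
  proof (intro sum.cong refl)
    fix a a'
    have "(\<Prod>n<N. g n (override_on c a' S n) (override_on c a S n)) = (\<Prod>n\<in>S. g n (a' n) (a n)) * (\<Prod>n\<in>R. g n (c n) (c n))" for c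
    proof -
      have "(\<Prod>n<N. g n (override_on c a' S n) (override_on c a S n)) = (\<Prod>n\<in>S \<union> R. g n (override_on c a' S n) (override_on c a S n))"
        using SR by simp
      also have "\<dots> = (\<Prod>n\<in>S. g n (override_on c a' S n) (override_on c a S n)) * (\<Prod>n\<in>R. g n (override_on c a' S n) (override_on c a S n))"
        by (rule prod.union_disjoint[OF fin SR(1)])
      also have "\<dots> = (\<Prod>n\<in>S. g n (a' n) (a n)) * (\<Prod>n\<in>R. g n (c n) (c n))"
        using SR by (intro arg_cong2[where f="(*)"] prod.cong refl) (auto simp: override_on_def)
      finally show ?thesis .
    qed
    then show "(\<Sum>c\<in>bitvecs R. local_block S OS a a' * (\<Prod>n<N. g n (override_on c a' S n) (override_on c a S n))) =
        local_block S OS a a' * (\<Prod>n\<in>S. g n (a' n) (a n)) * (\<Sum>c\<in>bitvecs R. \<Prod>n\<in>R. g n (c n) (c n))"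
      by (simp add: sum_distrib_left mult.assoc)
  qed
  also have "(\<Sum>c\<in>bitvecs R. \<Prod>n\<in>R. g n (c n) (c n)) = (\<Prod>n\<in>R. \<Sum>x<2. g n x x)"
    using fin by (subst sum_PiE_prod) auto
  finally show ?thesis
    by (simp add: local_pairing_def R_def sum_distrib_right)
qed

lemma hs_local_op:
  assumes S: "S \<subseteq> {..<N}"
  shows "(\<Sum>i<2^N. \<Sum>j<2^N. (cmod (local_op N S OS $$ (i,j)))^2) =
         2 ^ (N - card S) * (\<Sum>a\<in>bitvecs S. \<Sum>a'\<in>bitvecs S. (cmod (local_block S OS a a'))^2)"
proof -
  have fin: "finite S" using S finite_subset by auto
  have cR: "card ({..<N} - S) = N - card S" using S fin by (simp add: card_Diff_subset)
  have "(\<Sum>i<2^N. \<Sum>j<2^N. (cmod (local_op N S OS $$ (i,j)))^2) =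
     (\<Sum>a\<in>bitvecs S. \<Sum>a'\<in>bitvecs S. \<Sum>c\<in>bitvecs ({..<N} - S). (cmod (local_block S OS a a'))^2)"
    using sum_local_op_entries[OF S, of "\<lambda>x b b'. (cmod x)^2" OS] by simp
  also have "\<dots> = (\<Sum>a\<in>bitvecs S. \<Sum>a'\<in>bitvecs S. 2 ^ (N - card S) * (cmod (local_block S OS a a'))^2)"
    using cR by (simp add: card_PiE)
  finally show ?thesis by (simp add: sum_distrib_left)
qed

lemma local_pairing_empty: "local_pairing {} OS g = local_block {} OS (\<lambda>_. undefined) (\<lambda>_. undefined)"
  by (simp add: local_pairing_def)

lemma local_pairing_cong:
  assumes "\<And>n a b. n \<in> S \<Longrightarrow> a < 2 \<Longrightarrow> b < 2 \<Longrightarrow> g n a b = g' n a b"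
  shows "local_pairing S OS g = local_pairing S OS g'"
  unfolding local_pairing_def
proof (intro sum.cong refl arg_cong2[where f="(*)"] prod.cong)
  fix a a' n assume "a \<in> bitvecs S" "a' \<in> bitvecs S" "n \<in> S"
  then have "a n \<in> {..<2}" "a' n \<in> {..<2}" by (auto intro: PiE_mem)
  then show "g n (a' n) (a n) = g' n (a' n) (a n)" using assms \<open>n \<in> S\<close> by auto
qed

lemma local_pairing_sum:
  assumes "finite S"
  shows "local_pairing S OS (\<lambda>n a b. \<Sum>y<2. f n y a b) = (\<Sum>d\<in>bitvecs S. local_pairing S OS (\<lambda>n. f n (d n)))"
proof -
  have "local_pairing S OS (\<lambda>n a b. \<Sum>y<2. f n y a b) =
     (\<Sum>a\<in>bitvecs S. \<Sum>a'\<in>bitvecs S. local_block S OS a a' * (\<Sum>d\<in>bitvecs S. \<Prod>n\<in>S. f n (d n) (a' n) (a n)))"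
    unfolding local_pairing_def using assms by (subst sum_PiE_prod) auto
  also have "\<dots> = (\<Sum>d\<in>bitvecs S. local_pairing S OS (\<lambda>n. f n (d n)))"
    unfolding local_pairing_def sum_distrib_left
    by (subst sum.swap, rule sum.cong[OF refl], subst (2) sum.swap, simp)
  finally show ?thesis .
qed

lemma local_pairing_scale:
  "local_pairing S OS (\<lambda>n a b. c n * g n a b) = (\<Prod>n\<in>S. c n) * local_pairing S OS g"
  unfolding local_pairing_def by (simp add: prod.distrib sum_distrib_left mult_ac)

lemma ctrace_local_op_sic_shadow:
  assumes sic: "sic_set \<psi>" and S: "S \<subseteq> {..<N}" and s: "\<And>n. n < N \<Longrightarrow> s n < 4"
  shows "ctrace (local_op N S OS * sic_shadow \<psi> N s) = local_pairing S OS (\<lambda>n. shadow_op (\<psi> (s n)))"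
proof -
  have "ctrace (local_op N S OS * sic_shadow \<psi> N s) = tensor_pairing N (local_op N S OS) (\<lambda>n. shadow_op (\<psi> (s n)))"
    by (rule ctrace_mult_sic_shadow[OF local_op_carrier])
  also have "\<dots> = local_pairing S OS (\<lambda>n. shadow_op (\<psi> (s n))) * (\<Prod>n\<in>{..<N}-S. \<Sum>x<2. shadow_op (\<psi> (s n)) x x)"
    by (rule tensor_pairing_local_op[OF S])
  also have "(\<Prod>n\<in>{..<N}-S. \<Sum>x<2. shadow_op (\<psi> (s n)) x x) = 1"
  proof (intro prod.neutral ballI)
    fix n assume "n \<in> {..<N}-S"
    then show "(\<Sum>x<2. shadow_op (\<psi> (s n)) x x) = 1" using shadow_op_trace[OF sic_setD(2)[OF sic s[of n]]] by (simp add: sum_lessThan_2)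
  qed
  finally show ?thesis by simp
qed

section \<open>Operator norm bounds\<close>

lemma vnorm_power2: "(vnorm v)^2 = (\<Sum>i<dim_vec v. (cmod (v$i))^2)"
  by (simp add: vnorm_def sum_nonneg)

lemma vnorm_nonneg: "0 \<le> vnorm v"
  by (simp add: vnorm_def sum_nonneg)

lemma cmod_index_le_vnorm:
  assumes "i < dim_vec v" shows "cmod (v$i) \<le> vnorm v"
proof -
  have "(cmod (v$i))^2 \<le> (\<Sum>k<dim_vec v. (cmod (v$k))^2)"
    using assms by (intro member_le_sum) auto
  then have "sqrt ((cmod (v$i))^2) \<le> vnorm v" unfolding vnorm_def by (rule real_sqrt_le_mono)
  then show ?thesis by simp
qed

lemma bdd_above_opnorm:
  assumes A: "A \<in> carrier_mat n m"
  shows "bdd_above {vnorm (A *\<^sub>v v) | v. v \<in> carrier_vec (dim_col A) \<and> vnorm v = 1}"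
proof -
  define r where "r i = (\<Sum>j<m. cmod (A $$ (i,j)))" for i
  have "vnorm (A *\<^sub>v v) \<le> sqrt (\<Sum>i<n. (r i)^2)" if v: "v \<in> carrier_vec m" "vnorm v = 1" for v
  proof -
    have e: "cmod ((A *\<^sub>v v) $ i) \<le> r i" if i: "i < n" for i
    proof -
      have "cmod ((A *\<^sub>v v) $ i) = cmod (\<Sum>j<m. A $$ (i,j) * v $ j)" by (subst index_mult_mat_vec_sum[OF A v(1) i]) simp
      also have "\<dots> \<le> (\<Sum>j<m. cmod (A $$ (i,j)) * cmod (v $ j))"
        by (rule order_trans[OF norm_sum]) (simp add: norm_mult)
      also have "\<dots> \<le> (\<Sum>j<m. cmod (A $$ (i,j)) * 1)"
        using v cmod_index_le_vnorm[of _ v] by (intro sum_mono mult_left_mono) auto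
      finally show ?thesis by (simp add: r_def)
    qed
    have "vnorm (A *\<^sub>v v) = sqrt (\<Sum>i<n. (cmod ((A *\<^sub>v v) $ i))^2)" using A by (simp add: vnorm_def)
    also have "\<dots> \<le> sqrt (\<Sum>i<n. (r i)^2)"
      using e by (intro real_sqrt_le_mono sum_mono power_mono) auto
    finally show ?thesis .
  qed
  then show ?thesis using A unfolding bdd_above_def by auto
qed

lemma vnorm_mult_le_opnorm:
  assumes A: "A \<in> carrier_mat n m" and v: "v \<in> carrier_vec m" "vnorm v = 1"
  shows "vnorm (A *\<^sub>v v) \<le> opnorm A"
  unfolding opnorm_def
  by (rule cSup_upper) (use A v bdd_above_opnorm[OF A] in auto)

lemma col_sum_sq_le_1:
  assumes A: "A \<in> carrier_mat n n" "opnorm A = 1" and j: "j < n"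
  shows "(\<Sum>i<n. (cmod (A $$ (i,j)))^2) \<le> 1"
proof -
  let ?e = "unit_vec n j"
  have vn: "vnorm ?e = 1"
  proof -
    have "(\<Sum>i<n. (cmod (?e $ i))^2) = (\<Sum>i<n. if i = j then 1 else 0)"
      using j by (intro sum.cong refl) auto
    also have "\<dots> = 1" using j by simp
    finally show ?thesis by (simp add: vnorm_def)
  qed
  have "(A *\<^sub>v ?e) $ i = A $$ (i,j)" if "i < n" for i
  proof -
    have "(A *\<^sub>v ?e) $ i = (\<Sum>k<n. A $$ (i,k) * (if k = j then 1 else 0))"
      using j by (subst index_mult_mat_vec_sum[OF A(1) unit_vec_carrier that]) (auto intro!: sum.cong)
    also have "\<dots> = A $$ (i,j)" using j by (simp add: if_distrib sum.delta cong: if_cong)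
    finally show ?thesis .
  qed
  then have "(vnorm (A *\<^sub>v ?e))^2 = (\<Sum>i<n. (cmod (A $$ (i,j)))^2)"
    using A by (simp add: vnorm_power2)
  moreover have "vnorm (A *\<^sub>v ?e) \<le> 1" using vnorm_mult_le_opnorm[OF A(1) _ vn] A by simp
  moreover have "0 \<le> vnorm (A *\<^sub>v ?e)" by (rule vnorm_nonneg)
  ultimately show ?thesis by (metis power_le_one)
qed

lemma hs_le_dim:
  assumes A: "A \<in> carrier_mat n n" "opnorm A = 1"
  shows "(\<Sum>i<n. \<Sum>j<n. (cmod (A $$ (i,j)))^2) \<le> n"
proof -
  have "(\<Sum>i<n. \<Sum>j<n. (cmod (A $$ (i,j)))^2) = (\<Sum>j<n. \<Sum>i<n. (cmod (A $$ (i,j)))^2)"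
    by (rule sum.swap)
  also have "\<dots> \<le> (\<Sum>j<n. 1)" using col_sum_sq_le_1[OF A] by (intro sum_mono) auto
  finally show ?thesis by simp
qed

lemma vnorm_tensor_vecs:
  assumes "\<And>n. n < N \<Longrightarrow> (\<Sum>x<2. (cmod (w n $ x))^2) = 1"
  shows "vnorm (tensor_vecs N w) = 1"
proof -
  have "(\<Sum>i<2^N. (cmod (tensor_vecs N w $ i))^2) = (\<Sum>i<2^N. \<Prod>n<N. (cmod (w n $ qbit n i))^2)"
    by (intro sum.cong refl) (simp add: tensor_vecs_index prod_power_distrib flip: prod_norm)
  also have "\<dots> = (\<Sum>b\<in>bitvecs {..<N}. \<Prod>n<N. (cmod (w n $ b n))^2)"
    by (rule sum_reindex_bitvec_of) simp
  also have "\<dots> = (\<Prod>n<N. \<Sum>x<2. (cmod (w n $ x))^2)"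
    by (subst sum_PiE_prod) auto
  also have "\<dots> = 1" using assms by simp
  finally show ?thesis by (simp add: vnorm_def)
qed

lemma cmod_tensor_pairing_outer_le_1:
  assumes A: "A \<in> carrier_mat (2^N) (2^N)" "opnorm A = 1"
    and w: "\<And>n. n < N \<Longrightarrow> (\<Sum>x<2. (cmod (w n $ x))^2) = 1"
  shows "cmod (tensor_pairing N A (\<lambda>n. outer (w n))) \<le> 1"
proof -
  let ?W = "tensor_vecs N w"
  have vW: "vnorm ?W = 1" by (rule vnorm_tensor_vecs[OF w])
  have vAW: "vnorm (A *\<^sub>v ?W) \<le> 1" using vnorm_mult_le_opnorm[OF A(1) tensor_vecs_carrier vW] A by simp
  have "tensor_pairing N A (\<lambda>n. outer (w n)) = (\<Sum>i<2^N. (A *\<^sub>v ?W) $ i * cnj (?W $ i))"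
    by (simp add: quad_form_tensor_vecs[OF A(1), symmetric] scalar_prod_def atLeast0LessThan)
  then have "cmod (tensor_pairing N A (\<lambda>n. outer (w n))) \<le> (\<Sum>i<2^N. cmod ((A *\<^sub>v ?W) $ i) * cmod (?W $ i))"
    by (auto intro: order_trans[OF norm_sum] simp: norm_mult)
  also have "\<dots> \<le> (\<Sum>i<2^N. ((cmod ((A *\<^sub>v ?W) $ i))^2 + (cmod (?W $ i))^2) / 2)"
  proof (intro sum_mono)
    fix i
    have "0 \<le> (cmod ((A *\<^sub>v ?W) $ i) - cmod (?W $ i))^2" by simp
    then show "cmod ((A *\<^sub>v ?W) $ i) * cmod (?W $ i) \<le> ((cmod ((A *\<^sub>v ?W) $ i))^2 + (cmod (?W $ i))^2) / 2"
      by (simp add: power2_diff)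
  qed
  also have "\<dots> = ((vnorm (A *\<^sub>v ?W))^2 + (vnorm ?W)^2) / 2"
    using A by (simp add: vnorm_power2 sum.distrib add_divide_distrib sum_divide_distrib)
  also have "\<dots> \<le> 1"
    using vAW vW vnorm_nonneg[of "A *\<^sub>v ?W"] by (simp add: power_le_one)
  finally show ?thesis .
qed

definition perp :: "complex vec \<Rightarrow> complex vec" where
  "perp v = vec 2 (\<lambda>i. if i = 0 then - cnj (v$1) else cnj (v$0))"

lemma unit2_cnj_sum: "(\<Sum>x<2. (cmod (v $ x))^2) = 1 \<Longrightarrow> v$0 * cnj (v$0) + v$1 * cnj (v$1) = 1"
proof -
  assume h: "(\<Sum>x<2. (cmod (v $ x))^2) = 1"
  have "complex_of_real (\<Sum>x<2. (cmod (v $ x))^2) = v$0 * cnj (v$0) + v$1 * cnj (v$1)"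
    by (simp only: sum_lessThan_2 of_real_add complex_norm_square)
  then show ?thesis using h by simp
qed

lemma perp_unit: "(\<Sum>x<2. (cmod (v $ x))^2) = 1 \<Longrightarrow> (\<Sum>x<2. (cmod (perp v $ x))^2) = 1"
  by (simp add: perp_def sum_lessThan_2 add.commute)

lemma shadow_op_perp:
  assumes "(\<Sum>x<2. (cmod (v $ x))^2) = 1" "a < 2" "b < 2"
  shows "shadow_op v a b = 2 * outer v a b - outer (perp v) a b"
proof -
  have u: "v$0 * cnj (v$0) + v$1 * cnj (v$1) = 1" using unit2_cnj_sum[OF assms(1)] .
  have "a = 0 \<or> a = 1" "b = 0 \<or> b = 1" using assms by auto
  then show ?thesis using u
    by (auto simp: shadow_op_def outer_def perp_def algebra_simps)
qed

lemma outer_perp_sum: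
  assumes "(\<Sum>x<2. (cmod (v $ x))^2) = 1" "a < 2" "b < 2"
  shows "outer v a b + outer (perp v) a b = (if a = b then 1 else 0)"
proof -
  have u: "v$0 * cnj (v$0) + v$1 * cnj (v$1) = 1" using unit2_cnj_sum[OF assms(1)] .
  have "a = 0 \<or> a = 1" "b = 0 \<or> b = 1" using assms by auto
  then show ?thesis using u
    by (auto simp: outer_def perp_def algebra_simps)
qed

definition ket0 :: "complex vec" where "ket0 = vec 2 (\<lambda>i. if i = 0 then 1 else 0)"

definition ket1 :: "complex vec" where "ket1 = vec 2 (\<lambda>i. if i = 1 then 1 else 0)"

lemma outer_ket0_ket1: "a < 2 \<Longrightarrow> b < 2 \<Longrightarrow> outer ket0 a b + outer ket1 a b = (if a = b then 1 else 0)"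
  by (auto simp: outer_def ket0_def ket1_def less_2_cases_iff)

lemma cmod_local_pairing_outer_le_1:
  assumes S: "S \<subseteq> {..<N}" and A: "opnorm (local_op N S OS) = 1"
    and u: "\<And>n. n \<in> S \<Longrightarrow> (\<Sum>x<2. (cmod (u n $ x))^2) = 1"
  shows "cmod (local_pairing S OS (\<lambda>n. outer (u n))) \<le> 1"
proof -
  define uu where "uu n = (if n \<in> S then u n else ket0)" for n
  have "tensor_pairing N (local_op N S OS) (\<lambda>n. outer (uu n)) = local_pairing S OS (\<lambda>n. outer (uu n)) * (\<Prod>n\<in>{..<N}-S. \<Sum>x<2. outer (uu n) x x)"
    by (rule tensor_pairing_local_op[OF S])
  also have "(\<Prod>n\<in>{..<N}-S. \<Sum>x<2. outer (uu n) x x) = 1"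
    by (intro prod.neutral) (simp add: uu_def ket0_def outer_def sum_lessThan_2)
  also have "local_pairing S OS (\<lambda>n. outer (uu n)) = local_pairing S OS (\<lambda>n. outer (u n))"
    by (rule local_pairing_cong) (simp add: uu_def)
  finally have eq: "tensor_pairing N (local_op N S OS) (\<lambda>n. outer (uu n)) = local_pairing S OS (\<lambda>n. outer (u n))" by simp
  have "cmod (tensor_pairing N (local_op N S OS) (\<lambda>n. outer (uu n))) \<le> 1"
  proof (rule cmod_tensor_pairing_outer_le_1[OF local_op_carrier A])
    fix n show "(\<Sum>x<2. (cmod (uu n $ x))^2) = 1"
      using u by (cases "n \<in> S") (auto simp: uu_def ket0_def sum_lessThan_2)
  qed
  then show ?thesis using eq by simp
qed

lemma cmod_local_pairing_shadow_le:
  assumes S: "S \<subseteq> {..<N}" and A: "opnorm (local_op N S OS) = 1"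
    and v: "\<And>n. n \<in> S \<Longrightarrow> (\<Sum>x<2. (cmod (v n $ x))^2) = 1"
  shows "cmod (local_pairing S OS (\<lambda>n. shadow_op (v n))) \<le> 3 ^ card S"
proof -
  have fin: "finite S" using S finite_subset by auto
  define coef where "coef y = (if y = 0 then 2 else - 1 :: complex)" for y :: nat
  define wv where "wv n y = (if y = 0 then v n else perp (v n))" for n y :: nat
  have "local_pairing S OS (\<lambda>n. shadow_op (v n)) = local_pairing S OS (\<lambda>n a b. \<Sum>y<2. coef y * outer (wv n y) a b)"
    by (rule local_pairing_cong) (simp add: sum_lessThan_2 coef_def wv_def shadow_op_perp[OF v])
  also have "\<dots> = (\<Sum>d\<in>bitvecs S. local_pairing S OS (\<lambda>n a b. coef (d n) * outer (wv n (d n)) a b))"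
    by (rule local_pairing_sum[OF fin])
  also have "\<dots> = (\<Sum>d\<in>bitvecs S. (\<Prod>n\<in>S. coef (d n)) * local_pairing S OS (\<lambda>n. outer (wv n (d n))))"
    by (simp only: local_pairing_scale)
  finally have eq: "local_pairing S OS (\<lambda>n. shadow_op (v n)) = \<dots>" .
  have "cmod (local_pairing S OS (\<lambda>n. shadow_op (v n))) \<le> (\<Sum>d\<in>bitvecs S. (\<Prod>n\<in>S. cmod (coef (d n))) * 1)"
    unfolding eq
  proof (rule order_trans[OF norm_sum], intro sum_mono)
    fix d assume d: "d \<in> bitvecs S"
    have "cmod (local_pairing S OS (\<lambda>n. outer (wv n (d n)))) \<le> 1"
    proof (rule cmod_local_pairing_outer_le_1[OF S A])
      fix n assume "n \<in> S"
      then show "(\<Sum>x<2. (cmod (wv n (d n) $ x))^2) = 1"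
        using v perp_unit by (auto simp: wv_def)
    qed
    then show "cmod ((\<Prod>n\<in>S. coef (d n)) * local_pairing S OS (\<lambda>n. outer (wv n (d n)))) \<le> (\<Prod>n\<in>S. cmod (coef (d n))) * 1"
      by (simp add: norm_mult prod_norm mult_left_le)
  qed
  also have "\<dots> = (\<Prod>n\<in>S. \<Sum>y<2. cmod (coef y))"
    using fin sum_PiE_prod[where f="\<lambda>n y. cmod (coef y)" and A=S and B="\<lambda>_. {..<2}"] by simp
  also have "\<dots> = 3 ^ card S" by (simp add: sum_lessThan_2 coef_def)
  finally show ?thesis .
qed

section \<open>The second moment\<close>

text \<open>\<open>kernel_cov\<close> is half the kernel \<open>\<Sum>\<^sub>x shadow_op \<otimes> cnj shadow_op\<close> of a SIC set
  (\<open>sum_sic_shadow_op_cnj\<close>), so that \<open>kernel_form W A A\<close> is \<open>2\<^sup>-\<^sup>|\<^sup>W\<^sup>|\<close> times the sum of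
  the squared shadow estimates of \<open>A\<close> (\<open>sum_local_pairing_sq\<close>).\<close>

definition kernel_cov :: "nat \<Rightarrow> nat \<Rightarrow> nat \<Rightarrow> nat \<Rightarrow> complex" where
  "kernel_cov x' x y' y = 3 * ((if x' = y' then 1 else 0) * (if x = y then 1 else 0)) - (if x' = x then 1 else 0) * (if y = y' then 1 else 0)"

type_synonym bitmat = "(nat \<Rightarrow> nat) \<Rightarrow> (nat \<Rightarrow> nat) \<Rightarrow> complex"

definition kernel_form :: "nat set \<Rightarrow> bitmat \<Rightarrow> bitmat \<Rightarrow> complex" where
  "kernel_form W A B = (\<Sum>a\<in>bitvecs W. \<Sum>a'\<in>bitvecs W. \<Sum>c\<in>bitvecs W. \<Sum>c'\<in>bitvecs W.
      A a a' * cnj (B c c') * (\<Prod>n\<in>W. kernel_cov (a' n) (a n) (c' n) (c n)))"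

definition hs_sq :: "nat set \<Rightarrow> bitmat \<Rightarrow> real" where
  "hs_sq W A = (\<Sum>a\<in>bitvecs W. \<Sum>a'\<in>bitvecs W. (cmod (A a a'))^2)"

definition block :: "nat \<Rightarrow> bitmat \<Rightarrow> nat \<Rightarrow> nat \<Rightarrow> bitmat" where
  "block n A x x' = (\<lambda>a a'. A (a(n := x)) (a'(n := x')))"

lemma kernel_form_add_left: "kernel_form W (\<lambda>a a'. A a a' + B a a') C = kernel_form W A C + kernel_form W B C"
  by (simp add: kernel_form_def algebra_simps sum.distrib)

lemma kernel_form_diff_left: "kernel_form W (\<lambda>a a'. A a a' - B a a') C = kernel_form W A C - kernel_form W B C"
  by (simp add: kernel_form_def algebra_simps sum_subtractf)

lemma kernel_form_add_right: "kernel_form W C (\<lambda>a a'. A a a' + B a a') = kernel_form W C A + kernel_form W C B"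
  by (simp add: kernel_form_def algebra_simps sum.distrib)

lemma kernel_form_diff_right: "kernel_form W C (\<lambda>a a'. A a a' - B a a') = kernel_form W C A - kernel_form W C B"
  by (simp add: kernel_form_def algebra_simps sum_subtractf)

lemma kernel_form_insert:
  assumes "n \<notin> W" "finite W"
  shows "kernel_form (insert n W) A B =
     3 * (\<Sum>x<2. \<Sum>x'<2. kernel_form W (block n A x x') (block n B x x')) - (\<Sum>x<2. \<Sum>y<2. kernel_form W (block n A x x) (block n B y y))"
proof -
  have pr: "(\<Prod>m\<in>insert n W. kernel_cov ((a'(n:=x')) m) ((a(n:=x)) m) ((c'(n:=y')) m) ((c(n:=y)) m)) =
     kernel_cov x' x y' y * (\<Prod>m\<in>W. kernel_cov (a' m) (a m) (c' m) (c m))" for a a' c c' x x' y y'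
  proof -
    have "(\<Prod>m\<in>insert n W. kernel_cov ((a'(n:=x')) m) ((a(n:=x)) m) ((c'(n:=y')) m) ((c(n:=y)) m)) =
      kernel_cov x' x y' y * (\<Prod>m\<in>W. kernel_cov ((a'(n:=x')) m) ((a(n:=x)) m) ((c'(n:=y')) m) ((c(n:=y)) m))"
      using assms by simp
    also have "(\<Prod>m\<in>W. kernel_cov ((a'(n:=x')) m) ((a(n:=x)) m) ((c'(n:=y')) m) ((c(n:=y)) m)) = (\<Prod>m\<in>W. kernel_cov (a' m) (a m) (c' m) (c m))"
      using assms by (intro prod.cong refl) auto
    finally show ?thesis .
  qed
  have "kernel_form (insert n W) A B = (\<Sum>x<2. \<Sum>a\<in>bitvecs W. \<Sum>x'<2. \<Sum>a'\<in>bitvecs W. \<Sum>y<2. \<Sum>c\<in>bitvecs W. \<Sum>y'<2. \<Sum>c'\<in>bitvecs W.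
      A (a(n:=x)) (a'(n:=x')) * cnj (B (c(n:=y)) (c'(n:=y'))) * (kernel_cov x' x y' y * (\<Prod>m\<in>W. kernel_cov (a' m) (a m) (c' m) (c m))))"
    unfolding kernel_form_def by (simp only: sum_PiE_insert[OF assms(1)] pr)
  also have "\<dots> = (\<Sum>a\<in>bitvecs W. \<Sum>a'\<in>bitvecs W. \<Sum>c\<in>bitvecs W. \<Sum>c'\<in>bitvecs W.
      (\<Sum>x<2. \<Sum>x'<2. \<Sum>y<2. \<Sum>y'<2. kernel_cov x' x y' y * (A (a(n:=x)) (a'(n:=x')) * cnj (B (c(n:=y)) (c'(n:=y'))) * (\<Prod>m\<in>W. kernel_cov (a' m) (a m) (c' m) (c m)))))"
    by (simp add: sum_lessThan_2 sum.distrib mult_ac)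
  also have "\<dots> = (\<Sum>x<2. \<Sum>x'<2. \<Sum>y<2. \<Sum>y'<2. kernel_cov x' x y' y * kernel_form W (block n A x x') (block n B y y'))"
    by (simp add: sum_lessThan_2 sum.distrib kernel_form_def block_def sum_distrib_left)
  also have "\<dots> = 3 * (\<Sum>x<2. \<Sum>x'<2. kernel_form W (block n A x x') (block n B x x')) - (\<Sum>x<2. \<Sum>y<2. kernel_form W (block n A x x) (block n B y y))"
    by (simp add: sum_lessThan_2 kernel_cov_def algebra_simps)
  finally show ?thesis .
qed

lemma hs_sq_insert:
  assumes "n \<notin> W"
  shows "hs_sq (insert n W) A = (\<Sum>x<2. \<Sum>x'<2. hs_sq W (block n A x x'))"
  unfolding hs_sq_def block_def
  by (simp only: sum_PiE_insert[OF assms]) (simp add: sum_lessThan_2 sum.distrib)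

lemma kernel_form_empty: "kernel_form {} A A = A (\<lambda>_. undefined) (\<lambda>_. undefined) * cnj (A (\<lambda>_. undefined) (\<lambda>_. undefined))"
  by (simp add: kernel_form_def)

lemma hs_sq_empty: "hs_sq {} A = (cmod (A (\<lambda>_. undefined) (\<lambda>_. undefined)))^2"
  by (simp add: hs_sq_def)

text \<open>Write \<open>Q B = kernel_form W B B\<close>. On a new qubit \<open>n\<close>, with \<open>A\<^sub>x\<^sub>x\<^sub>'\<close> the \<open>2\<times>2\<close> blocks of \<open>A\<close>,
  \<open>kernel_form (insert n W) A A = 3 \<Sum> Q(A\<^sub>x\<^sub>x\<^sub>') - Q(A\<^sub>0\<^sub>0 + A\<^sub>1\<^sub>1)\<close>; this stays nonnegative because
  \<open>Q(A\<^sub>0\<^sub>0 + A\<^sub>1\<^sub>1) + Q(A\<^sub>0\<^sub>0 - A\<^sub>1\<^sub>1) = 2 (Q(A\<^sub>0\<^sub>0) + Q(A\<^sub>1\<^sub>1))\<close>.\<close>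

lemma kernel_form_bound_insert:
  assumes "n \<notin> W" "finite W"
    and IH: "\<And>B. Im (kernel_form W B B) = 0 \<and> 0 \<le> Re (kernel_form W B B) \<and>
                   Re (kernel_form W B B) \<le> 3 ^ card W * hs_sq W B"
  shows "Im (kernel_form (insert n W) A A) = 0 \<and> 0 \<le> Re (kernel_form (insert n W) A A) \<and>
         Re (kernel_form (insert n W) A A) \<le> 3 ^ card (insert n W) * hs_sq (insert n W) A"
proof -
  define Q where "Q x x' = kernel_form W (block n A x x') (block n A x x')" for x x'
  define D where "D = (\<lambda>a a'. block n A 0 0 a a' + block n A 1 1 a a')"
  define E where "E = (\<lambda>a a'. block n A 0 0 a a' - block n A 1 1 a a')"
  define X where "X = kernel_form W (block n A 0 0) (block n A 1 1) + kernel_form W (block n A 1 1) (block n A 0 0)"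
  have split: "kernel_form (insert n W) A A = 3 * (Q 0 0 + Q 0 1 + Q 1 0 + Q 1 1) - kernel_form W D D"
    unfolding kernel_form_insert[OF assms(1,2)] D_def kernel_form_add_left kernel_form_add_right
    by (simp add: sum_lessThan_2 Q_def)
  have DD: "kernel_form W D D = Q 0 0 + Q 1 1 + X"
    unfolding D_def kernel_form_add_left kernel_form_add_right by (simp add: Q_def X_def)
  have EE: "kernel_form W E E = Q 0 0 + Q 1 1 - X"
    unfolding E_def kernel_form_diff_left kernel_form_diff_right by (simp add: Q_def X_def)
  have q: "Im (Q x x') = 0" "0 \<le> Re (Q x x')" "Re (Q x x') \<le> 3 ^ card W * hs_sq W (block n A x x')" for x x'
    using IH[of "block n A x x'"] by (auto simp: Q_def)
  have d: "Im (kernel_form W D D) = 0" "0 \<le> Re (kernel_form W D D)" using IH[of D] by auto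
  have e: "0 \<le> Re (kernel_form W E E)" using IH[of E] by auto
  have hs: "hs_sq (insert n W) A = hs_sq W (block n A 0 0) + hs_sq W (block n A 0 1)
      + hs_sq W (block n A 1 0) + hs_sq W (block n A 1 1)"
    by (simp add: hs_sq_insert[OF assms(1)] sum_lessThan_2)
  have "Im (kernel_form (insert n W) A A) = 0"
    unfolding split using q(1)[of 0 0] q(1)[of 0 1] q(1)[of 1 0] q(1)[of 1 1] d(1) by simp
  moreover have "0 \<le> Re (kernel_form (insert n W) A A)"
    unfolding split using q(2)[of 0 0] q(2)[of 0 1] q(2)[of 1 0] q(2)[of 1 1] DD EE e by simp
  moreover have "Re (kernel_form (insert n W) A A) \<le> 3 ^ card (insert n W) * hs_sq (insert n W) A"
    unfolding split hs using q(3)[of 0 0] q(3)[of 0 1] q(3)[of 1 0] q(3)[of 1 1] d(2) assms(1,2)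
    by (simp add: algebra_simps)
  ultimately show ?thesis by blast
qed

lemma kernel_form_bound:
  assumes "finite W"
  shows "Im (kernel_form W A A) = 0 \<and> 0 \<le> Re (kernel_form W A A) \<and>
         Re (kernel_form W A A) \<le> 3 ^ card W * hs_sq W A"
  using assms
proof (induction W arbitrary: A rule: finite_induct)
  case empty
  have "kernel_form {} A A = complex_of_real ((cmod (A (\<lambda>_. undefined) (\<lambda>_. undefined)))^2)"
    by (simp only: kernel_form_empty complex_norm_square)
  then show ?case by (simp add: hs_sq_empty)
next
  case (insert n W)
  then show ?case by (intro kernel_form_bound_insert) auto
qed

lemma sum_local_pairing_sq:
  assumes "sic_set \<psi>" "finite S"
  shows "(\<Sum>t\<in>PiE S (\<lambda>_. {..<4}). local_pairing S OS (\<lambda>n. shadow_op (\<psi> (t n))) * cnj (local_pairing S OS (\<lambda>n. shadow_op (\<psi> (t n)))))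
     = 2 ^ card S * kernel_form S (local_block S OS) (local_block S OS)"
proof -
  let ?M = "local_block S OS"
  have "(\<Sum>t\<in>PiE S (\<lambda>_. {..<4}). local_pairing S OS (\<lambda>n. shadow_op (\<psi> (t n))) * cnj (local_pairing S OS (\<lambda>n. shadow_op (\<psi> (t n)))))
    = (\<Sum>t\<in>PiE S (\<lambda>_. {..<4}). \<Sum>a\<in>bitvecs S. \<Sum>a'\<in>bitvecs S. \<Sum>c\<in>bitvecs S. \<Sum>c'\<in>bitvecs S.
        ?M a a' * cnj (?M c c') * (\<Prod>n\<in>S. shadow_op (\<psi> (t n)) (a' n) (a n) * cnj (shadow_op (\<psi> (t n)) (c' n) (c n))))"
    unfolding local_pairing_def
    by (intro sum.cong refl) (simp only: cnj_sum complex_cnj_mult cnj_prod, simp only: sum_distrib_right,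
        simp only: sum_distrib_left, intro sum.cong refl, simp add: prod.distrib mult_ac)
  also have "\<dots> = (\<Sum>a\<in>bitvecs S. \<Sum>a'\<in>bitvecs S. \<Sum>c\<in>bitvecs S. \<Sum>c'\<in>bitvecs S.
        ?M a a' * cnj (?M c c') * (\<Sum>t\<in>PiE S (\<lambda>_. {..<4}). \<Prod>n\<in>S. shadow_op (\<psi> (t n)) (a' n) (a n) * cnj (shadow_op (\<psi> (t n)) (c' n) (c n))))"
    by (simp only: sum.swap[where A="PiE S (\<lambda>_. {..<4})"] sum_distrib_left[symmetric])
  also have "\<dots> = (\<Sum>a\<in>bitvecs S. \<Sum>a'\<in>bitvecs S. \<Sum>c\<in>bitvecs S. \<Sum>c'\<in>bitvecs S.
        ?M a a' * cnj (?M c c') * (2 ^ card S * (\<Prod>n\<in>S. kernel_cov (a' n) (a n) (c' n) (c n))))"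
  proof (intro sum.cong refl)
    fix a a' c c' assume h: "a \<in> bitvecs S" "a' \<in> bitvecs S" "c \<in> bitvecs S" "c' \<in> bitvecs S"
    have "(\<Sum>t\<in>PiE S (\<lambda>_. {..<4}). \<Prod>n\<in>S. shadow_op (\<psi> (t n)) (a' n) (a n) * cnj (shadow_op (\<psi> (t n)) (c' n) (c n)))
        = (\<Prod>n\<in>S. \<Sum>x<4. shadow_op (\<psi> x) (a' n) (a n) * cnj (shadow_op (\<psi> x) (c' n) (c n)))"
      using assms(2) by (subst sum_PiE_prod) auto
    also have "\<dots> = (\<Prod>n\<in>S. 2 * kernel_cov (a' n) (a n) (c' n) (c n))"
    proof (intro prod.cong refl)
      fix n assume n: "n \<in> S"
      have lt: "a n < 2" "a' n < 2" "c n < 2" "c' n < 2" using h n by (auto dest: PiE_mem)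
      show "(\<Sum>x<4. shadow_op (\<psi> x) (a' n) (a n) * cnj (shadow_op (\<psi> x) (c' n) (c n))) = 2 * kernel_cov (a' n) (a n) (c' n) (c n)"
        unfolding sum_sic_shadow_op_cnj[OF assms(1) lt(2,1,4,3)] kernel_cov_def by (simp add: algebra_simps)
    qed
    also have "\<dots> = 2 ^ card S * (\<Prod>n\<in>S. kernel_cov (a' n) (a n) (c' n) (c n))"
      by (simp add: prod.distrib)
    finally show "?M a a' * cnj (?M c c') * (\<Sum>t\<in>PiE S (\<lambda>_. {..<4}). \<Prod>n\<in>S. shadow_op (\<psi> (t n)) (a' n) (a n) * cnj (shadow_op (\<psi> (t n)) (c' n) (c n)))
       = ?M a a' * cnj (?M c c') * (2 ^ card S * (\<Prod>n\<in>S. kernel_cov (a' n) (a n) (c' n) (c n)))" by simp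
  qed
  also have "\<dots> = 2 ^ card S * kernel_form S ?M ?M"
    by (simp add: kernel_form_def sum_distrib_left mult_ac)
  finally show ?thesis .
qed

lemma sum_local_pairing_sq_le:
  assumes "sic_set \<psi>" "finite S"
  shows "(\<Sum>t\<in>PiE S (\<lambda>_. {..<4}). (cmod (local_pairing S OS (\<lambda>n. shadow_op (\<psi> (t n)))))^2)
     \<le> 6 ^ card S * hs_sq S (local_block S OS)"
proof -
  let ?G = "\<lambda>t. local_pairing S OS (\<lambda>n. shadow_op (\<psi> (t n)))"
  have "complex_of_real (\<Sum>t\<in>PiE S (\<lambda>_. {..<4}). (cmod (?G t))^2) = 2 ^ card S * kernel_form S (local_block S OS) (local_block S OS)"
    using sum_local_pairing_sq[OF assms, of OS] by (simp only: of_real_sum complex_norm_square)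
  then have "(\<Sum>t\<in>PiE S (\<lambda>_. {..<4}). (cmod (?G t))^2) = Re (2 ^ card S * kernel_form S (local_block S OS) (local_block S OS))"
    by (metis Re_complex_of_real)
  also have "\<dots> = 2 ^ card S * Re (kernel_form S (local_block S OS) (local_block S OS))"
    by simp
  also have "\<dots> \<le> 2 ^ card S * (3 ^ card S * hs_sq S (local_block S OS))"
    using kernel_form_bound[OF assms(2)] by (intro mult_left_mono) auto
  also have "\<dots> = 6 ^ card S * hs_sq S (local_block S OS)"
    by (simp add: power_mult_distrib[symmetric])
  finally show ?thesis .
qed

lemma hs_sq_local_block_le:
  assumes S: "S \<subseteq> {..<N}" and A: "opnorm (local_op N S OS) = 1"
  shows "hs_sq S (local_block S OS) \<le> 2 ^ card S"
proof -
  have kN: "card S \<le> N" using S card_mono[of "{..<N}" S] by simp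
  have "2 ^ (N - card S) * hs_sq S (local_block S OS) \<le> 2^N"
    using hs_local_op[OF S, of OS] hs_le_dim[OF local_op_carrier A] by (simp add: hs_sq_def)
  moreover have "(2::real) ^ N = 2 ^ (N - card S) * 2 ^ card S" using kN by (simp flip: power_add)
  ultimately show ?thesis by simp
qed

text \<open>Completing each \<open>u n\<close> to the orthonormal basis \<open>{u n, perp (u n)}\<close>, and the identity to
  \<open>{ket0, ket1}\<close>, writes \<open>tr \<rho> = 1\<close> as a sum of nonnegative terms, one of which is the pairing.\<close>

lemma Re_tensor_pairing_partial_outer_le:
  assumes dens: "density_matrix N \<rho>"
    and u: "\<And>n. n \<in> S \<Longrightarrow> (\<Sum>x<2. (cmod (u n $ x))^2) = 1"
  shows "Re (tensor_pairing N \<rho> (\<lambda>n a b. if n \<in> S then outer (u n) a b else if a = b then 1 else 0)) \<le> 1"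
proof -
  have c: "\<rho> \<in> carrier_mat (2^N) (2^N)" "ctrace \<rho> = 1" using dens by (auto simp: density_matrix_def)
  define f where "f n y = (if n \<in> S then (if y = 0 then u n else perp (u n)) else (if y = 0 then ket0 else ket1))"
    for n y :: nat
  define C where "C n = (if n \<in> S then {0} else {..<2::nat})" for n :: nat
  define T where "T c = Re (tensor_pairing N \<rho> (\<lambda>n. outer (f n (c n))))" for c
  have "tensor_pairing N \<rho> (\<lambda>n a b. if n \<in> S then outer (u n) a b else if a = b then 1 else 0)
      = tensor_pairing N \<rho> (\<lambda>n a b. \<Sum>y\<in>C n. outer (f n y) a b)"
    by (rule tensor_pairing_cong) (simp add: C_def f_def sum_lessThan_2 outer_ket0_ket1)
  also have "\<dots> = (\<Sum>c\<in>PiE {..<N} C. tensor_pairing N \<rho> (\<lambda>n. outer (f n (c n))))"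
    by (rule sum_PiE_tensor_pairing[symmetric]) (simp add: C_def)
  finally have part: "Re (tensor_pairing N \<rho> (\<lambda>n a b. if n \<in> S then outer (u n) a b else if a = b then 1 else 0))
      = (\<Sum>c\<in>PiE {..<N} C. T c)" by (simp add: T_def)
  have "(\<Sum>c\<in>bitvecs {..<N}. tensor_pairing N \<rho> (\<lambda>n. outer (f n (c n))))
      = tensor_pairing N \<rho> (\<lambda>n a b. \<Sum>y<2. outer (f n y) a b)"
    by (rule sum_PiE_tensor_pairing) simp
  also have "\<dots> = tensor_pairing N \<rho> (\<lambda>n a b. if a = b then 1 else 0)"
  proof (rule tensor_pairing_cong)
    fix n a b :: nat assume "n < N" "a < 2" "b < 2"
    then show "(\<Sum>y<2. outer (f n y) a b) = (if a = b then 1 else 0)"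
      by (cases "n \<in> S") (auto simp: sum_lessThan_2 f_def outer_perp_sum[OF u] outer_ket0_ket1)
  qed
  also have "\<dots> = 1" using tensor_pairing_delta[OF c(1)] c(2) by simp
  finally have total: "(\<Sum>c\<in>bitvecs {..<N}. T c) = 1" unfolding T_def by (metis Re_sum one_complex.sel(1))
  have "(\<Sum>c\<in>PiE {..<N} C. T c) \<le> (\<Sum>c\<in>bitvecs {..<N}. T c)"
  proof (rule sum_mono2)
    show "PiE {..<N} C \<subseteq> bitvecs {..<N}" by (rule PiE_mono) (auto simp: C_def)
    show "0 \<le> T c" for c unfolding T_def by (rule density_tensor_pairing_outer(2)[OF dens])
  qed (simp add: finite_PiE)
  then show ?thesis using part total by simp
qed

lemma sic_prob_marginal_le:
  assumes sic: "sic_set \<psi>" and dens: "density_matrix N \<rho>" and S: "S \<subseteq> {..<N}"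
    and t: "\<And>n. n \<in> S \<Longrightarrow> t n < 4"
  shows "(\<Sum>u\<in>PiE ({..<N}-S) (\<lambda>_. {..<4}). sic_prob \<psi> N \<rho> (override_on u t S)) \<le> 1 / 2^card S"
proof -
  define g where "g n a b = (if n \<in> S then outer (\<psi> (t n)) a b else if a = b then 1 else 0)" for n a b
  have cR: "card ({..<N} - S) = N - card S" using S finite_subset[OF S] by (simp add: card_Diff_subset)
  have "complex_of_real (2^N * (\<Sum>u\<in>PiE ({..<N}-S) (\<lambda>_. {..<4}). sic_prob \<psi> N \<rho> (override_on u t S)))
     = (\<Sum>u\<in>PiE ({..<N}-S) (\<lambda>_. {..<4}). tensor_pairing N \<rho> (\<lambda>n. outer (\<psi> (override_on u t S n))))"
    by (simp add: tensor_pairing_sic_prob[OF dens] sum_distrib_left)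
  also have "\<dots> = tensor_pairing N \<rho> (\<lambda>n a b. if n \<in> S then outer (\<psi> (t n)) a b else \<Sum>x<4. outer (\<psi> x) a b)"
    by (rule sum_PiE_tensor_pairing_partial[OF S]) simp
  also have "\<dots> = tensor_pairing N \<rho> (\<lambda>n a b. (if n \<in> S then 1 else 2) * g n a b)"
    by (rule tensor_pairing_cong) (simp add: g_def sic_frame[OF sic])
  also have "\<dots> = 2 ^ (N - card S) * tensor_pairing N \<rho> g"
  proof -
    have "(\<Prod>n<N. (if n \<in> S then 1 else 2::complex)) = 2 ^ card ({..<N} - S)"
      by (simp add: prod.If_cases Diff_eq)
    then show ?thesis unfolding tensor_pairing_scale cR by simp
  qed
  finally have eq: "complex_of_real (2^N * (\<Sum>u\<in>PiE ({..<N}-S) (\<lambda>_. {..<4}). sic_prob \<psi> N \<rho> (override_on u t S)))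
     = 2 ^ (N - card S) * tensor_pairing N \<rho> g" .
  have "2^N * (\<Sum>u\<in>PiE ({..<N}-S) (\<lambda>_. {..<4}). sic_prob \<psi> N \<rho> (override_on u t S))
      = 2 ^ (N - card S) * Re (tensor_pairing N \<rho> g)"
    using arg_cong[OF eq, of Re] by simp
  also have "\<dots> \<le> 2 ^ (N - card S)"
  proof -
    have "Re (tensor_pairing N \<rho> g) \<le> 1"
      unfolding g_def by (rule Re_tensor_pairing_partial_outer_le[OF dens]) (rule sic_setD(3)[OF sic t])
    then show ?thesis by simp
  qed
  finally have "2^N * (\<Sum>u\<in>PiE ({..<N}-S) (\<lambda>_. {..<4}). sic_prob \<psi> N \<rho> (override_on u t S)) \<le> 2 ^ (N - card S)" .
  moreover have "(2::real) ^ N = 2 ^ (N - card S) * 2 ^ card S"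
    using S card_mono[of "{..<N}" S] by (simp flip: power_add)
  ultimately show ?thesis by (simp add: field_simps)
qed

lemma sum_outcomes_split:
  assumes "S \<subseteq> {..<N}"
  shows "(\<Sum>s\<in>outcomes N. F s) =
    (\<Sum>t\<in>PiE S (\<lambda>_. {..<4}). \<Sum>u\<in>PiE ({..<N} - S) (\<lambda>_. {..<4}). F (override_on u t S))"
proof -
  have "S \<union> ({..<N} - S) = {..<N}" "S \<inter> ({..<N} - S) = {}" using assms by auto
  then show ?thesis unfolding outcomes_eq_PiE by (metis sum_PiE_union)
qed

lemma sic_shadow_second_moment:
  assumes sic: "sic_set \<psi>" and dens: "density_matrix N \<rho>" and S: "S \<subseteq> {..<N}"
    and A: "opnorm (local_op N S OS) = 1"
  shows "(\<Sum>s\<in>outcomes N. sic_prob \<psi> N \<rho> s * (cmod (ctrace (local_op N S OS * sic_shadow \<psi> N s)))^2) \<le> 6 ^ card S"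
proof -
  define R where "R = {..<N} - S"
  have SR: "S \<inter> R = {}" "S \<union> R = {..<N}" using S by (auto simp: R_def)
  have finS: "finite S" using S finite_subset by auto
  define G where "G t = local_pairing S OS (\<lambda>n. shadow_op (\<psi> (t n)))" for t
  define p where "p s = sic_prob \<psi> N \<rho> s" for s
  have X: "ctrace (local_op N S OS * sic_shadow \<psi> N (override_on u t S)) = G t"
    if t: "t \<in> PiE S (\<lambda>_. {..<4})" and u: "u \<in> PiE R (\<lambda>_. {..<4})" for t u
  proof -
    have "override_on u t S n < 4" if "n < N" for n
      using that t u SR by (auto simp: override_on_def dest: PiE_mem)
    then have "ctrace (local_op N S OS * sic_shadow \<psi> N (override_on u t S))
        = local_pairing S OS (\<lambda>n. shadow_op (\<psi> (override_on u t S n)))"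
      by (rule ctrace_local_op_sic_shadow[OF sic S])
    also have "\<dots> = G t" unfolding G_def by (rule local_pairing_cong) (simp add: override_on_def)
    finally show ?thesis .
  qed
  have "(\<Sum>s\<in>outcomes N. p s * (cmod (ctrace (local_op N S OS * sic_shadow \<psi> N s)))^2)
      = (\<Sum>t\<in>PiE S (\<lambda>_. {..<4}). \<Sum>u\<in>PiE R (\<lambda>_. {..<4}). (cmod (G t))^2 * p (override_on u t S))"
    unfolding sum_outcomes_split[OF S] R_def[symmetric] by (intro sum.cong refl) (simp add: X mult.commute)
  also have "\<dots> = (\<Sum>t\<in>PiE S (\<lambda>_. {..<4}). (cmod (G t))^2 * (\<Sum>u\<in>PiE R (\<lambda>_. {..<4}). p (override_on u t S)))"
    by (simp add: sum_distrib_left)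
  also have "\<dots> \<le> (\<Sum>t\<in>PiE S (\<lambda>_. {..<4}). (cmod (G t))^2 * (1 / 2 ^ card S))"
  proof (intro sum_mono mult_left_mono)
    fix t assume t: "t \<in> PiE S (\<lambda>_. {..<4::nat})"
    show "(\<Sum>u\<in>PiE R (\<lambda>_. {..<4}). p (override_on u t S)) \<le> 1 / 2 ^ card S"
      unfolding p_def R_def by (rule sic_prob_marginal_le[OF sic dens S]) (use t in \<open>auto dest: PiE_mem\<close>)
  qed simp
  also have "\<dots> = (\<Sum>t\<in>PiE S (\<lambda>_. {..<4}). (cmod (G t))^2) / 2 ^ card S"
    by (simp add: sum_divide_distrib)
  also have "\<dots> \<le> 6 ^ card S * hs_sq S (local_block S OS) / 2 ^ card S"
    unfolding G_def by (intro divide_right_mono sum_local_pairing_sq_le[OF sic finS]) simp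
  also have "\<dots> \<le> 6 ^ card S * 2 ^ card S / 2 ^ card S"
    by (intro divide_right_mono mult_left_mono hs_sq_local_block_le[OF S A]) auto
  also have "\<dots> = 6 ^ card S" by simp
  finally show ?thesis by (simp add: p_def)
qed

section \<open>Concentration\<close>

lemma exp_le_quadratic_nonpos:
  fixes x :: real
  assumes "x \<le> 0"
  shows "exp x \<le> 1 + x + x^2 / 2"
proof -
  obtain t where t: "exp x = (\<Sum>m<3. x ^ m / fact m) + exp t / fact 3 * x ^ 3"
    using Maclaurin_exp_le[of x 3] by blast
  have "x ^ 3 \<le> 0" using assms by (simp add: power3_eq_cube mult_le_0_iff zero_le_mult_iff)
  then have "exp t / fact 3 * x ^ 3 \<le> 0" by (intro mult_nonneg_nonpos) auto
  moreover have "(\<Sum>m<3. x ^ m / fact m) = 1 + x + x^2 / 2" by (simp add: numeral_eq_Suc)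
  ultimately show ?thesis using t by linarith
qed

lemma exp_le_quadratic_small:
  fixes x :: real
  assumes x: "0 \<le> x" "x \<le> 7/10"
  shows "exp x \<le> 1 + x + 13/20 * x^2"
proof -
  obtain t where t: "\<bar>t\<bar> \<le> \<bar>x\<bar>" "exp x = (\<Sum>m<5. x ^ m / fact m) + exp t / fact 5 * x ^ 5"
    using Maclaurin_exp_le[of x 5] by blast
  have "exp t \<le> exp 1" using t(1) x by simp
  also have "\<dots> \<le> 3" by (rule exp_le)
  finally have "exp t / fact 5 * x ^ 5 \<le> 3 / 120 * x ^ 5"
    using x by (intro mult_right_mono) (auto simp: fact_numeral)
  moreover have "(\<Sum>m<5. x ^ m / fact m) = 1 + x + x^2/2 + x^3/6 + x^4/24"
    by (simp add: numeral_eq_Suc)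
  moreover have "x ^ (k + 2) \<le> (7/10) ^ k * x^2" for k
  proof -
    have "x ^ k * x^2 \<le> (7/10) ^ k * x^2" using x by (intro mult_right_mono power_mono) auto
    then show ?thesis by (metis power_add)
  qed
  from this[of 1] this[of 2] this[of 3]
  have "x^3 \<le> 7/10 * x^2" "x^4 \<le> 49/100 * x^2" "x^5 \<le> 343/1000 * x^2"
    by (simp_all add: numeral_eq_Suc)
  ultimately show ?thesis using t(2) zero_le_power2[of x] by linarith
qed

lemma exp_le_quadratic:
  fixes x :: real
  assumes "x \<le> 7/10"
  shows "exp x \<le> 1 + x + 13/20 * x^2"
proof (cases "x \<le> 0")
  case True
  then show ?thesis using exp_le_quadratic_nonpos[of x] zero_le_power2[of x] by linarith
next
  case False
  then show ?thesis using exp_le_quadratic_small assms by simp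
qed

lemma sum_PiE_prod_power:
  fixes f :: "'s \<Rightarrow> 'c :: comm_semiring_1"
  assumes "finite \<Omega>"
  shows "(\<Sum>ss\<in>PiE {0..<M} (\<lambda>_. \<Omega>). \<Prod>m<M. f (ss m)) = (\<Sum>s\<in>\<Omega>. f s) ^ M"
  using sum_PiE_prod[of "{0..<M}" "\<lambda>_. \<Omega>" "\<lambda>_. f"] assms by (simp add: atLeast0LessThan)

lemma exp_moment_le:
  fixes p Y :: "'s \<Rightarrow> real"
  assumes "\<And>s. s \<in> \<Omega> \<Longrightarrow> 0 \<le> p s" "(\<Sum>s\<in>\<Omega>. p s) = 1"
    and "(\<Sum>s\<in>\<Omega>. p s * Y s) = 0" "(\<Sum>s\<in>\<Omega>. p s * (Y s)^2) \<le> V"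
    and "0 \<le> lam" "\<And>s. s \<in> \<Omega> \<Longrightarrow> lam * Y s \<le> 7/10"
  shows "(\<Sum>s\<in>\<Omega>. p s * exp (lam * Y s)) \<le> exp (13/20 * lam^2 * V)"
proof -
  have "(\<Sum>s\<in>\<Omega>. p s * exp (lam * Y s)) \<le> (\<Sum>s\<in>\<Omega>. p s * (1 + lam * Y s + 13/20 * (lam * Y s)^2))"
    using assms(1,6) by (intro sum_mono mult_left_mono exp_le_quadratic) auto
  also have "\<dots> = (\<Sum>s\<in>\<Omega>. p s) + lam * (\<Sum>s\<in>\<Omega>. p s * Y s) + 13/20 * lam^2 * (\<Sum>s\<in>\<Omega>. p s * (Y s)^2)"
    by (simp add: algebra_simps sum.distrib sum_distrib_left power_mult_distrib)
  also have "\<dots> \<le> 1 + 13/20 * lam^2 * V" using assms(2-4) by (simp add: mult_left_mono)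
  also have "\<dots> \<le> exp (13/20 * lam^2 * V)" by (rule exp_ge_add_one_self)
  finally show ?thesis .
qed

text \<open>Chernoff's method with \<open>\<lambda> = 7\<epsilon>/(10V)\<close>: the bound \<open>Y \<le> V\<close> keeps \<open>\<lambda>Y \<le> 7/10\<close>,
  where \<open>exp_le_quadratic\<close> applies, and the resulting exponent
  \<open>-(7/10 - 13/20 \<cdot> 49/100) M\<epsilon>\<^sup>2/V\<close> is below \<open>-3/8 \<cdot> M\<epsilon>\<^sup>2/V\<close>.\<close>

lemma chernoff_upper_tail:
  fixes p Y :: "'s \<Rightarrow> real"
  assumes fin: "finite \<Omega>" and pnn: "\<And>s. s \<in> \<Omega> \<Longrightarrow> 0 \<le> p s" and p1: "(\<Sum>s\<in>\<Omega>. p s) = 1"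
    and mean: "(\<Sum>s\<in>\<Omega>. p s * Y s) = 0" and var: "(\<Sum>s\<in>\<Omega>. p s * (Y s)^2) \<le> V"
    and V: "0 < V" and bnd: "\<And>s. s \<in> \<Omega> \<Longrightarrow> Y s \<le> V" and eps: "0 < \<epsilon>" "\<epsilon> \<le> 1"
  shows "(\<Sum>ss\<in>{ss\<in>PiE {0..<M} (\<lambda>_. \<Omega>). real M * \<epsilon> < (\<Sum>m<M. Y (ss m))}. \<Prod>m<M. p (ss m))
          \<le> exp (- 3/8 * real M * \<epsilon>^2 / V)"
proof -
  define lam where "lam = 7/10 * \<epsilon> / V"
  have lam0: "0 \<le> lam" using V eps by (simp add: lam_def)
  have lamY: "lam * Y s \<le> 7/10" if "s \<in> \<Omega>" for s
  proof -
    have "lam * Y s \<le> lam * V" using bnd[OF that] lam0 by (rule mult_left_mono)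
    then show ?thesis using V eps by (simp add: lam_def)
  qed
  let ?\<Omega>M = "PiE {0..<M} (\<lambda>_. \<Omega>)"
  let ?w = "\<lambda>ss. \<Prod>m<M. p (ss m)"
  let ?e = "\<lambda>ss. exp (lam * ((\<Sum>m<M. Y (ss m)) - real M * \<epsilon>))"
  have wnn: "0 \<le> ?w ss" if "ss \<in> ?\<Omega>M" for ss
    using that pnn by (intro prod_nonneg) (auto dest: PiE_mem)
  have "(\<Sum>ss\<in>{ss\<in>?\<Omega>M. real M * \<epsilon> < (\<Sum>m<M. Y (ss m))}. ?w ss)
     \<le> (\<Sum>ss\<in>{ss\<in>?\<Omega>M. real M * \<epsilon> < (\<Sum>m<M. Y (ss m))}. ?w ss * ?e ss)"
  proof (intro sum_mono)
    fix ss assume ss: "ss \<in> {ss\<in>?\<Omega>M. real M * \<epsilon> < (\<Sum>m<M. Y (ss m))}"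
    then have "1 \<le> ?e ss" using lam0 by simp
    then show "?w ss \<le> ?w ss * ?e ss" using wnn[of ss] ss mult_left_mono[of 1 "?e ss" "?w ss"] by simp
  qed
  also have "\<dots> \<le> (\<Sum>ss\<in>?\<Omega>M. ?w ss * ?e ss)"
    using fin wnn by (intro sum_mono2) (auto simp: finite_PiE)
  also have "\<dots> = exp (- lam * real M * \<epsilon>) * (\<Sum>ss\<in>?\<Omega>M. \<Prod>m<M. p (ss m) * exp (lam * Y (ss m)))"
  proof -
    have "?e ss = exp (- lam * real M * \<epsilon>) * (\<Prod>m<M. exp (lam * Y (ss m)))" for ss
      by (simp add: exp_sum[symmetric] exp_add[symmetric] sum_distrib_left algebra_simps)
    then show ?thesis by (simp add: sum_distrib_left prod.distrib mult_ac)
  qed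
  also have "\<dots> = exp (- lam * real M * \<epsilon>) * (\<Sum>s\<in>\<Omega>. p s * exp (lam * Y s)) ^ M"
    using sum_PiE_prod_power[OF fin, of "\<lambda>s. p s * exp (lam * Y s)" M] by simp
  also have "\<dots> \<le> exp (- lam * real M * \<epsilon>) * exp (13/20 * lam^2 * V) ^ M"
    using exp_moment_le[OF pnn p1 mean var lam0 lamY] pnn
    by (intro mult_left_mono power_mono sum_nonneg) auto
  also have "\<dots> = exp (- (763/2000) * (real M * \<epsilon>^2 / V))"
    using V by (simp add: exp_of_nat_mult[symmetric] exp_add[symmetric] lam_def power2_eq_square field_simps)
  also have "\<dots> \<le> exp (- 3/8 * (real M * \<epsilon>^2 / V))"
    using V by (intro exp_mono mult_right_mono) auto
  finally show ?thesis by (simp add: mult.assoc times_divide_eq_right)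
qed

lemma sum_filter_le_disj:
  fixes w :: "'a \<Rightarrow> real"
  assumes "finite A" "\<And>x. x \<in> A \<Longrightarrow> 0 \<le> w x" "\<And>x. x \<in> A \<Longrightarrow> P x \<Longrightarrow> Q1 x \<or> Q2 x"
  shows "(\<Sum>x\<in>{x\<in>A. P x}. w x) \<le> (\<Sum>x\<in>{x\<in>A. Q1 x}. w x) + (\<Sum>x\<in>{x\<in>A. Q2 x}. w x)"
proof -
  have "(\<Sum>x\<in>{x\<in>A. P x}. w x) = (\<Sum>x\<in>A. if P x then w x else 0)"
    using assms(1) by (simp add: sum.inter_filter)
  also have "\<dots> \<le> (\<Sum>x\<in>A. (if Q1 x then w x else 0) + (if Q2 x then w x else 0))"
    using assms(2,3) by (intro sum_mono) auto
  also have "\<dots> = (\<Sum>x\<in>{x\<in>A. Q1 x}. w x) + (\<Sum>x\<in>{x\<in>A. Q2 x}. w x)"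
    using assms(1) by (simp add: sum.distrib sum.inter_filter)
  finally show ?thesis .
qed

lemma sum_filter_Bex_le:
  fixes w :: "'a \<Rightarrow> real"
  assumes "finite A" "finite I" "\<And>x. x \<in> A \<Longrightarrow> 0 \<le> w x"
  shows "(\<Sum>x\<in>{x\<in>A. \<exists>i\<in>I. P i x}. w x) \<le> (\<Sum>i\<in>I. \<Sum>x\<in>{x\<in>A. P i x}. w x)"
proof -
  have "(\<Sum>x\<in>{x\<in>A. \<exists>i\<in>I. P i x}. w x) = (\<Sum>x\<in>A. if \<exists>i\<in>I. P i x then w x else 0)"
    using assms(1) by (simp add: sum.inter_filter)
  also have "\<dots> \<le> (\<Sum>x\<in>A. \<Sum>i\<in>I. if P i x then w x else 0)"
  proof (intro sum_mono)
    fix x assume x: "x \<in> A"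
    show "(if \<exists>i\<in>I. P i x then w x else 0) \<le> (\<Sum>i\<in>I. if P i x then w x else 0)"
    proof (cases "\<exists>i\<in>I. P i x")
      case True
      then obtain i where i: "i \<in> I" "P i x" by blast
      then have "(if P i x then w x else 0) \<le> (\<Sum>i\<in>I. if P i x then w x else 0)"
        using assms(2,3) x by (intro member_le_sum) auto
      with True i show ?thesis by simp
    qed (use assms(3) x in \<open>auto intro: sum_nonneg\<close>)
  qed
  also have "\<dots> = (\<Sum>i\<in>I. \<Sum>x\<in>{x\<in>A. P i x}. w x)"
    using assms(1) by (subst sum.swap) (simp add: sum.inter_filter)
  finally show ?thesis .
qed

lemma sum_filter_compl:
  fixes w :: "'a \<Rightarrow> real"
  assumes "finite A"
  shows "(\<Sum>x\<in>{x\<in>A. P x}. w x) = (\<Sum>x\<in>A. w x) - (\<Sum>x\<in>{x\<in>A. \<not> P x}. w x)"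
proof -
  have "A \<inter> {x. P x} = {x\<in>A. P x}" "A - {x. P x} = {x\<in>A. \<not> P x}" by auto
  then show ?thesis using sum.Int_Diff[OF assms, of w "{x. P x}"] by simp
qed

lemma chernoff_two_sided:
  fixes p Y :: "'s \<Rightarrow> real"
  assumes fin: "finite \<Omega>" and pnn: "\<And>s. s \<in> \<Omega> \<Longrightarrow> 0 \<le> p s" and p1: "(\<Sum>s\<in>\<Omega>. p s) = 1"
    and mean: "(\<Sum>s\<in>\<Omega>. p s * Y s) = 0" and var: "(\<Sum>s\<in>\<Omega>. p s * (Y s)^2) \<le> V"
    and V: "0 < V" and bnd: "\<And>s. s \<in> \<Omega> \<Longrightarrow> \<bar>Y s\<bar> \<le> V" and eps: "0 < \<epsilon>" "\<epsilon> \<le> 1"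
  shows "(\<Sum>ss\<in>{ss\<in>PiE {0..<M} (\<lambda>_. \<Omega>). real M * \<epsilon> < \<bar>\<Sum>m<M. Y (ss m)\<bar>}. \<Prod>m<M. p (ss m))
          \<le> 2 * exp (- 3/8 * real M * \<epsilon>^2 / V)"
proof -
  let ?\<Omega>M = "PiE {0..<M} (\<lambda>_. \<Omega>)"
  have "(\<Sum>ss\<in>{ss\<in>?\<Omega>M. real M * \<epsilon> < \<bar>\<Sum>m<M. Y (ss m)\<bar>}. \<Prod>m<M. p (ss m))
     \<le> (\<Sum>ss\<in>{ss\<in>?\<Omega>M. real M * \<epsilon> < (\<Sum>m<M. Y (ss m))}. \<Prod>m<M. p (ss m))
       + (\<Sum>ss\<in>{ss\<in>?\<Omega>M. real M * \<epsilon> < (\<Sum>m<M. - Y (ss m))}. \<Prod>m<M. p (ss m))"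
    using fin pnn by (intro sum_filter_le_disj prod_nonneg)
      (auto simp: finite_PiE sum_negf abs_if dest: PiE_mem split: if_splits)
  also have "\<dots> \<le> exp (- 3/8 * real M * \<epsilon>^2 / V) + exp (- 3/8 * real M * \<epsilon>^2 / V)"
  proof (intro add_mono)
    show "(\<Sum>ss\<in>{ss\<in>?\<Omega>M. real M * \<epsilon> < (\<Sum>m<M. Y (ss m))}. \<Prod>m<M. p (ss m))
        \<le> exp (- 3/8 * real M * \<epsilon>^2 / V)"
      using bnd by (intro chernoff_upper_tail[OF fin pnn p1 mean var V _ eps]) (auto simp: abs_le_iff)
    have "(\<Sum>s\<in>\<Omega>. p s * - Y s) = 0" using mean by (simp add: sum_negf)
    then show "(\<Sum>ss\<in>{ss\<in>?\<Omega>M. real M * \<epsilon> < (\<Sum>m<M. - Y (ss m))}. \<Prod>m<M. p (ss m))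
        \<le> exp (- 3/8 * real M * \<epsilon>^2 / V)"
      using bnd var by (intro chernoff_upper_tail[OF fin pnn p1 _ _ V _ eps]) (auto simp: abs_le_iff)
  qed
  finally show ?thesis by simp
qed

lemma abs_sub_weighted_mean_le:
  fixes p X :: "'s \<Rightarrow> real"
  assumes "\<And>s'. s' \<in> \<Omega> \<Longrightarrow> 0 \<le> p s'" "(\<Sum>s'\<in>\<Omega>. p s') = 1"
    and "\<And>s'. s' \<in> \<Omega> \<Longrightarrow> \<bar>X s - X s'\<bar> \<le> B"
  shows "\<bar>X s - (\<Sum>s'\<in>\<Omega>. p s' * X s')\<bar> \<le> B"
proof -
  have "X s - (\<Sum>s'\<in>\<Omega>. p s' * X s') = (\<Sum>s'\<in>\<Omega>. p s' * (X s - X s'))"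
    using assms(2) by (simp add: algebra_simps sum_subtractf flip: sum_distrib_left)
  also have "\<bar>\<dots>\<bar> \<le> (\<Sum>s'\<in>\<Omega>. p s' * B)"
    using assms(1,3) by (intro order_trans[OF sum_abs] sum_mono) (simp add: abs_mult mult_left_mono)
  also have "\<dots> = B" using assms(2) by (simp flip: sum_distrib_right)
  finally show ?thesis .
qed

lemma weighted_variance_eq:
  fixes p X :: "'s \<Rightarrow> real"
  assumes "(\<Sum>s\<in>\<Omega>. p s) = 1"
  shows "(\<Sum>s\<in>\<Omega>. p s * (X s - (\<Sum>s'\<in>\<Omega>. p s' * X s'))^2) = (\<Sum>s\<in>\<Omega>. p s * (X s)^2) - (\<Sum>s\<in>\<Omega>. p s * X s)^2"
proof -
  define \<mu> where "\<mu> = (\<Sum>s'\<in>\<Omega>. p s' * X s')"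
  have "(\<Sum>s\<in>\<Omega>. p s * (X s - \<mu>)^2)
      = (\<Sum>s\<in>\<Omega>. p s * (X s)^2) - 2 * \<mu> * (\<Sum>s\<in>\<Omega>. p s * X s) + \<mu>^2 * (\<Sum>s\<in>\<Omega>. p s)"
    by (simp add: power2_diff algebra_simps sum_subtractf sum.distrib sum_distrib_left sum_distrib_right)
  then show ?thesis using assms by (simp add: \<mu>_def power2_eq_square)
qed

lemma cmod_mean_sub_real:
  fixes z :: "nat \<Rightarrow> complex"
  assumes "\<And>m. Im (z m) = 0" "Im c = 0" "0 < M"
  shows "cmod ((\<Sum>m<M. z m) / of_nat M - c) = \<bar>\<Sum>m<M. Re (z m) - Re c\<bar> / real M"
proof -
  have "Im ((\<Sum>m<M. z m) / of_nat M - c) = 0" using assms(1,2) by (simp add: Im_divide)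
  moreover have "Re ((\<Sum>m<M. z m) / of_nat M - c) = (\<Sum>m<M. Re (z m) - Re c) / real M"
    using assms(3) by (simp add: Re_divide sum_subtractf field_simps power2_eq_square)
  ultimately show ?thesis by (simp add: cmod_eq_Re)
qed

section \<open>Shadow estimates of a local observable\<close>

lemma acts_on_at_mostE:
  assumes "acts_on_at_most N K A"
  obtains S OS where "S \<subseteq> {..<N}" "card S \<le> K" "A = local_op N S OS"
proof -
  obtain S where S: "card S \<le> K" "acts_on N S A" using assms by (auto simp: acts_on_at_most_def)
  then obtain OS where "S \<subseteq> {..<N}" "A = local_op N S OS" using acts_on_local_op by blast
  with S(1) show ?thesis using that by blast
qed

lemma Im_ctrace_sic_shadow:
  assumes "hermitian A" "A \<in> carrier_mat (2^N) (2^N)"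
  shows "Im (ctrace (A * sic_shadow \<psi> N s)) = 0"
  unfolding ctrace_mult_sic_shadow[OF assms(2)]
  by (rule Im_tensor_pairing[OF assms]) (simp add: cnj_shadow_op)

lemma sic_shadow_mean:
  assumes "sic_set \<psi>" "density_matrix N \<rho>" "A \<in> carrier_mat (2^N) (2^N)"
  shows "(\<Sum>s\<in>outcomes N. sic_prob \<psi> N \<rho> s * Re (ctrace (A * sic_shadow \<psi> N s))) = Re (ctrace (A * \<rho>))"
  using arg_cong[OF sic_shadow_unbiased[OF assms], of Re] by simp

lemma sic_shadow_second_moment_le:
  assumes sic: "sic_set \<psi>" and dens: "density_matrix N \<rho>"
    and A: "opnorm A = 1" "acts_on_at_most N K A"
  shows "(\<Sum>s\<in>outcomes N. sic_prob \<psi> N \<rho> s * (cmod (ctrace (A * sic_shadow \<psi> N s)))^2) \<le> 6 ^ K"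
proof -
  obtain S OS where S: "S \<subseteq> {..<N}" "card S \<le> K" and AS: "A = local_op N S OS"
    using acts_on_at_mostE[OF A(2)] .
  have "(\<Sum>s\<in>outcomes N. sic_prob \<psi> N \<rho> s * (cmod (ctrace (A * sic_shadow \<psi> N s)))^2) \<le> 6 ^ card S"
    unfolding AS by (rule sic_shadow_second_moment[OF sic dens S(1)]) (use A AS in simp)
  also have "\<dots> \<le> 6 ^ K" using S(2) by (intro power_increasing) auto
  finally show ?thesis .
qed

text \<open>For \<open>S = {}\<close> the shadow estimate is constant; otherwise each value is bounded by
  \<open>3^|S|\<close>, so two values differ by at most \<open>2 \<cdot> 3^|S| \<le> 6^|S|\<close>.\<close>

lemma sic_shadow_spread_le:
  assumes sic: "sic_set \<psi>" and A: "opnorm A = 1" "acts_on_at_most N K A"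
    and s: "s \<in> outcomes N" "s' \<in> outcomes N"
  shows "\<bar>Re (ctrace (A * sic_shadow \<psi> N s)) - Re (ctrace (A * sic_shadow \<psi> N s'))\<bar> \<le> 6 ^ K"
proof -
  obtain S OS where S: "S \<subseteq> {..<N}" "card S \<le> K" and AS: "A = local_op N S OS"
    using acts_on_at_mostE[OF A(2)] .
  have X: "ctrace (A * sic_shadow \<psi> N t) = local_pairing S OS (\<lambda>n. shadow_op (\<psi> (t n)))"
    if "t \<in> outcomes N" for t
    unfolding AS by (rule ctrace_local_op_sic_shadow[OF sic S(1)]) (use outcomes_less_4[OF that] in auto)
  have "\<bar>Re (ctrace (A * sic_shadow \<psi> N s)) - Re (ctrace (A * sic_shadow \<psi> N s'))\<bar> \<le> 6 ^ card S"
  proof (cases "S = {}")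
    case True
    then show ?thesis using X s by (simp add: local_pairing_empty)
  next
    case False
    then have "1 \<le> card S" using finite_subset[OF S(1)] by (simp add: Suc_le_eq card_gt_0_iff)
    have "cmod (ctrace (A * sic_shadow \<psi> N t)) \<le> 3 ^ card S" if "t \<in> outcomes N" for t
      unfolding X[OF that]
      using A AS S(1) outcomes_less_4[OF that] sic_setD(3)[OF sic]
      by (intro cmod_local_pairing_shadow_le) auto
    then have "\<bar>Re (ctrace (A * sic_shadow \<psi> N s)) - Re (ctrace (A * sic_shadow \<psi> N s'))\<bar> \<le> 2 * 3 ^ card S"
      using s abs_Re_le_cmod by (smt (verit))
    also have "\<dots> \<le> 2 ^ card S * 3 ^ card S"
      using \<open>1 \<le> card S\<close> by (intro mult_right_mono) (auto simp: self_le_power)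
    finally show ?thesis by (simp flip: power_mult_distrib)
  qed
  also have "\<dots> \<le> 6 ^ K" using S(2) by (intro power_increasing) auto
  finally show ?thesis .
qed

lemma sic_shadow_deviation_prob_le:
  assumes sic: "sic_set \<psi>" and dens: "density_matrix N \<rho>"
    and A: "A \<in> carrier_mat (2^N) (2^N)" "hermitian A" "opnorm A = 1" "acts_on_at_most N K A"
    and eps: "0 < \<epsilon>" "\<epsilon> \<le> 1" and M: "0 < M"
  shows "iid_prob \<psi> N \<rho> M (\<lambda>ss.
            \<not> cmod ((\<Sum>m<M. ctrace (A * sic_shadow \<psi> N (ss m))) / of_nat M - ctrace (A * \<rho>)) \<le> \<epsilon>)
          \<le> 2 * exp (- 3/8 * real M * \<epsilon>^2 / 6^K)"
proof -
  define p where "p = sic_prob \<psi> N \<rho>"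
  define X where "X s = Re (ctrace (A * sic_shadow \<psi> N s))" for s
  define Y where "Y s = X s - Re (ctrace (A * \<rho>))" for s
  note fin = finite_outcomes[of N]
  have pnn: "0 \<le> p s" for s unfolding p_def by (rule sic_prob_nonneg[OF dens])
  have p1: "(\<Sum>s\<in>outcomes N. p s) = 1" unfolding p_def by (rule sic_prob_sum[OF sic dens])
  have mean: "(\<Sum>s\<in>outcomes N. p s * X s) = Re (ctrace (A * \<rho>))"
    unfolding p_def X_def by (rule sic_shadow_mean[OF sic dens A(1)])
  have "(\<Sum>s\<in>outcomes N. p s * Y s) = 0"
    using p1 mean by (simp add: Y_def algebra_simps sum_subtractf flip: sum_distrib_right)
  moreover have "(\<Sum>s\<in>outcomes N. p s * (Y s)^2) \<le> 6^K"
  proof -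
    have "(\<Sum>s\<in>outcomes N. p s * (Y s)^2) \<le> (\<Sum>s\<in>outcomes N. p s * (X s)^2)"
      using weighted_variance_eq[OF p1, of X] by (simp add: Y_def mean)
    also have "\<dots> \<le> (\<Sum>s\<in>outcomes N. p s * (cmod (ctrace (A * sic_shadow \<psi> N s)))^2)"
      unfolding X_def using pnn abs_Re_le_cmod
      by (intro sum_mono mult_left_mono) (auto intro: power2_le_iff_abs_le[THEN iffD2] order_trans)
    also have "\<dots> \<le> 6^K" unfolding p_def by (rule sic_shadow_second_moment_le[OF sic dens A(3,4)])
    finally show ?thesis .
  qed
  moreover have "\<bar>Y s\<bar> \<le> 6^K" if "s \<in> outcomes N" for s
    unfolding Y_def mean[symmetric] using pnn p1 sic_shadow_spread_le[OF sic A(3,4) that]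
    by (intro abs_sub_weighted_mean_le) (auto simp: X_def)
  ultimately have tail: "(\<Sum>ss\<in>{ss\<in>PiE {0..<M} (\<lambda>_. outcomes N). real M * \<epsilon> < \<bar>\<Sum>m<M. Y (ss m)\<bar>}.
      \<Prod>m<M. p (ss m)) \<le> 2 * exp (- 3/8 * real M * \<epsilon>^2 / 6^K)"
    using pnn p1 eps by (intro chernoff_two_sided[OF fin]) auto
  have dev: "cmod ((\<Sum>m<M. ctrace (A * sic_shadow \<psi> N (ss m))) / of_nat M - ctrace (A * \<rho>))
      = \<bar>\<Sum>m<M. Y (ss m)\<bar> / real M" for ss
  proof -
    have "hermitian \<rho>" "\<rho> \<in> carrier_mat (2^N) (2^N)" using dens by (auto simp: density_matrix_def)
    then show ?thesis
      using cmod_mean_sub_real[of "\<lambda>m. ctrace (A * sic_shadow \<psi> N (ss m))" "ctrace (A * \<rho>)" M]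
        Im_ctrace_sic_shadow[OF A(2,1)] Im_ctrace_hermitian_mult[OF A(2,1)] M
      by (simp add: Y_def X_def)
  qed
  have "(\<not> cmod ((\<Sum>m<M. ctrace (A * sic_shadow \<psi> N (ss m))) / of_nat M - ctrace (A * \<rho>)) \<le> \<epsilon>)
      \<longleftrightarrow> real M * \<epsilon> < \<bar>\<Sum>m<M. Y (ss m)\<bar>" for ss
    unfolding dev using M by (simp add: pos_divide_le_eq not_le mult.commute)
  then show ?thesis using tail by (simp add: iid_prob_def p_def)
qed

lemma sample_size_exp_le:
  fixes L M :: nat and V \<epsilon> \<delta> :: real
  assumes "1 \<le> L" "0 < \<delta>" "\<delta> < 1" "0 < \<epsilon>" "0 < V"
    and M: "8/3 * V * ln (2 * real L / \<delta>) / \<epsilon>^2 \<le> real M"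
  shows "0 < M" and "2 * exp (- 3/8 * real M * \<epsilon>^2 / V) \<le> \<delta> / real L"
proof -
  have "1 < 2 * real L / \<delta>" using assms(1-3) by (simp add: field_simps)
  then have "0 < 8/3 * V * ln (2 * real L / \<delta>) / \<epsilon>^2" using assms(4,5) by simp
  then show "0 < M" using M by (metis of_nat_0_less_iff order_less_le_trans)
  have "ln (2 * real L / \<delta>) \<le> 3/8 * real M * \<epsilon>^2 / V"
    using mult_right_mono[OF M, of "3/8 * \<epsilon>^2 / V"] assms(4,5) by (simp add: field_simps)
  then have "2 * exp (- 3/8 * real M * \<epsilon>^2 / V) \<le> 2 * exp (- ln (2 * real L / \<delta>))" by simp
  also have "\<dots> = \<delta> / real L"
    using assms(1,2) by (simp add: exp_minus field_simps)
  finally show "2 * exp (- 3/8 * real M * \<epsilon>^2 / V) \<le> \<delta> / real L" .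
qed

lemma iid_prob_True:
  assumes "sic_set \<psi>" "density_matrix N \<rho>"
  shows "iid_prob \<psi> N \<rho> M (\<lambda>_. True) = 1"
  unfolding iid_prob_def by (simp add: sum_PiE_prod_power[OF finite_outcomes] sic_prob_sum[OF assms])

lemma iid_prob_compl:
  assumes "sic_set \<psi>" "density_matrix N \<rho>"
  shows "iid_prob \<psi> N \<rho> M E = 1 - iid_prob \<psi> N \<rho> M (\<lambda>ss. \<not> E ss)"
  using sum_filter_compl[where A="PiE {0..<M} (\<lambda>_. outcomes N)" and P=E
      and w="\<lambda>ss. \<Prod>m<M. sic_prob \<psi> N \<rho> (ss m)"] iid_prob_True[OF assms, of M]
  by (simp add: iid_prob_def finite_outcomes finite_PiE)

lemma iid_prob_Bex_le:
  assumes "density_matrix N \<rho>" "finite I"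
  shows "iid_prob \<psi> N \<rho> M (\<lambda>ss. \<exists>i\<in>I. E i ss) \<le> (\<Sum>i\<in>I. iid_prob \<psi> N \<rho> M (E i))"
  unfolding iid_prob_def using sic_prob_nonneg[OF assms(1)] assms(2)
  by (intro sum_filter_Bex_le) (auto simp: finite_outcomes finite_PiE intro: prod_nonneg)

theorem mainTheorem3:
  fixes \<psi> :: "nat \<Rightarrow> complex vec" and N K L M :: nat and \<rho> :: "complex mat"
    and Obs :: "nat \<Rightarrow> complex mat" and \<epsilon> \<delta> :: real
  assumes "sic_set \<psi>"
    and "density_matrix N \<rho>"
    and "\<forall>l \<in> {1..L}. Obs l \<in> carrier_mat (2 ^ N) (2 ^ N) \<and> hermitian (Obs l) \<and>
           opnorm (Obs l) = 1 \<and> acts_on_at_most N K (Obs l)"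
    and "0 < \<epsilon>" "\<epsilon> < 1" "0 < \<delta>" "\<delta> < 1"
    and "real M \<ge> 8 / 3 * 6 ^ K * ln (2 * real L / \<delta>) / \<epsilon>\<^sup>2"
  shows "iid_prob \<psi> N \<rho> M (\<lambda>ss. \<forall>l \<in> {1..L}.
           cmod ((\<Sum>m<M. ctrace (Obs l * sic_shadow \<psi> N (ss m))) / of_nat M - ctrace (Obs l * \<rho>)) \<le> \<epsilon>)
         \<ge> 1 - \<delta>"
proof -
  define bad where "bad l ss \<longleftrightarrow>
    \<not> cmod ((\<Sum>m<M. ctrace (Obs l * sic_shadow \<psi> N (ss m))) / of_nat M - ctrace (Obs l * \<rho>)) \<le> \<epsilon>" for l ss
  have "iid_prob \<psi> N \<rho> M (\<lambda>ss. \<exists>l\<in>{1..L}. bad l ss) \<le> (\<Sum>l\<in>{1..L}. iid_prob \<psi> N \<rho> M (bad l))"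
    by (rule iid_prob_Bex_le[OF assms(2)]) simp
  also have "\<dots> \<le> (\<Sum>l\<in>{1..L}. \<delta> / real L)"
  proof (intro sum_mono)
    fix l assume l: "l \<in> {1..L}"
    then have "1 \<le> L" by simp
    from sample_size_exp_le[OF this assms(6,7,4) _ assms(8)]
    have M: "0 < M" and exp_le: "2 * exp (- 3/8 * real M * \<epsilon>^2 / 6^K) \<le> \<delta> / real L" by auto
    have "Obs l \<in> carrier_mat (2^N) (2^N)" "hermitian (Obs l)" "opnorm (Obs l) = 1"
      "acts_on_at_most N K (Obs l)" using assms(3) l by auto
    note dev = sic_shadow_deviation_prob_le[OF assms(1,2) this assms(4) less_imp_le[OF assms(5)] M]
    show "iid_prob \<psi> N \<rho> M (bad l) \<le> \<delta> / real L"
      unfolding bad_def[abs_def] using order_trans[OF dev exp_le] by simp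
  qed
  also have "\<dots> \<le> \<delta>" using assms(6) by (cases "L = 0") auto
  finally show ?thesis
    using iid_prob_compl[OF assms(1,2), of M "\<lambda>ss. \<forall>l\<in>{1..L}. \<not> bad l ss"] by (simp add: bad_def)
qed

end
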